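(* Let $n\neq1$ and $(bp)^2+a^2(c+b)^2\neq0$. Then the radial wave equation (A) possesses a nontrivial kinematic conservation law if and only if it has a hyperbolic quasilinear divergence form, i.e. iff $a=pb\neq0$.
   Context: Equation (A) is $u_{tt}=(c+bu^{p})\big(u_{rr}+\frac{n-1}{r}u_{r}\big)+au^{p-1}u_{r}^{2}$ for $u(t,r)$, $r>0$, $u>0$. A kinematic conservation law is one whose multiplier is a function $Q=\alpha(t,r)$ only, i.e. $\alpha\cdot(u_{tt}-\text{RHS})=D_tT+D_rX$ identically for some $T,X$. Divergence form means (A) can be written as $(r^{n-1}u_t)_t=(r^{n-1}F(u,u_r))_r$; (A) is called quasilinear hyperbolic iff $bp\neq0$. *)

theory Defs
  imports "HOL-Analysis.Analysis"
begin

definition pd_t :: "(real \<Rightarrow> real \<Rightarrow> real) \<Rightarrow> real \<Rightarrow> real \<Rightarrow> real" where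
  "pd_t f = (\<lambda>t r. deriv (\<lambda>s. f s r) t)"

definition pd_r :: "(real \<Rightarrow> real \<Rightarrow> real) \<Rightarrow> real \<Rightarrow> real \<Rightarrow> real" where
  "pd_r f = (\<lambda>t r. deriv (\<lambda>x. f t x) r)"

definition pd :: "nat \<Rightarrow> nat \<Rightarrow> (real \<Rightarrow> real \<Rightarrow> real) \<Rightarrow> real \<Rightarrow> real \<Rightarrow> real" where
  "pd i j f = (pd_t ^^ i) ((pd_r ^^ j) f)"

definition Omega :: "(real \<times> real) set" where
  "Omega = {(t, r). r > 0}"

text \<open>C-infinity on an open set U: all partial derivatives exist, are mutually
  consistent (symmetric) and jointly continuous.\<close>
definition smooth_on2 :: "(real \<times> real) set \<Rightarrow> (real \<Rightarrow> real \<Rightarrow> real) \<Rightarrow> bool" where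
  "smooth_on2 U f \<longleftrightarrow>
     (\<forall>i j. continuous_on U (\<lambda>(t, r). pd i j f t r) \<and>
       (\<forall>(t, r)\<in>U.
          ((\<lambda>s. pd i j f s r) has_real_derivative pd (Suc i) j f t r) (at t) \<and>
          ((\<lambda>x. pd i j f t x) has_real_derivative pd i (Suc j) f t r) (at r)))"

definition admissible :: "(real \<Rightarrow> real \<Rightarrow> real) \<Rightarrow> bool" where
  "admissible u \<longleftrightarrow> smooth_on2 Omega u \<and> (\<forall>(t, r)\<in>Omega. u t r > 0)"

definition jet :: "(real \<Rightarrow> real \<Rightarrow> real) \<Rightarrow> real \<Rightarrow> real \<Rightarrow> nat \<Rightarrow> nat \<Rightarrow> real" where
  "jet u t r = (\<lambda>i j. pd i j u t r)"

text \<open>A differential function: depends on (t, r) and finitely many jet coordinates.\<close>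
definition local_fun :: "(real \<Rightarrow> real \<Rightarrow> (nat \<Rightarrow> nat \<Rightarrow> real) \<Rightarrow> real) \<Rightarrow> bool" where
  "local_fun F \<longleftrightarrow> (\<exists>k. \<forall>t r J J'. (\<forall>i j. i + j \<le> k \<longrightarrow> J i j = J' i j) \<longrightarrow> F t r J = F t r J')"

definition eval_df :: "(real \<Rightarrow> real \<Rightarrow> (nat \<Rightarrow> nat \<Rightarrow> real) \<Rightarrow> real) \<Rightarrow> (real \<Rightarrow> real \<Rightarrow> real) \<Rightarrow> real \<Rightarrow> real \<Rightarrow> real" where
  "eval_df F u = (\<lambda>t r. F t r (jet u t r))"

definition Eop :: "real \<Rightarrow> real \<Rightarrow> real \<Rightarrow> real \<Rightarrow> real \<Rightarrow> (real \<Rightarrow> real \<Rightarrow> real) \<Rightarrow> real \<Rightarrow> real \<Rightarrow> real" where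
  "Eop n a b c p u t r =
     pd 2 0 u t r
     - (c + b * u t r powr p) * (pd 0 2 u t r + (n - 1) / r * pd 0 1 u t r)
     - a * u t r powr (p - 1) * (pd 0 1 u t r)\<^sup>2"

text \<open>alpha(t,r) is the multiplier of a nontrivial kinematic conservation law of (A):
  alpha is smooth, not identically zero, and alpha * E[u] = D_t T + D_r X identically
  (for all smooth positive u) with smooth differential functions T, X of finite order.\<close>
definition kinematic_cl :: "real \<Rightarrow> real \<Rightarrow> real \<Rightarrow> real \<Rightarrow> real \<Rightarrow> (real \<Rightarrow> real \<Rightarrow> real) \<Rightarrow> bool" where
  "kinematic_cl n a b c p \<alpha> \<longleftrightarrow>
     smooth_on2 Omega \<alpha> \<and> (\<exists>(t, r)\<in>Omega. \<alpha> t r \<noteq> 0) \<and>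
     (\<exists>T X. local_fun T \<and> local_fun X \<and>
        (\<forall>u. admissible u \<longrightarrow>
           smooth_on2 Omega (eval_df T u) \<and> smooth_on2 Omega (eval_df X u) \<and>
           (\<forall>(t, r)\<in>Omega.
              \<alpha> t r * Eop n a b c p u t r = pd_t (eval_df T u) t r + pd_r (eval_df X u) t r)))"

definition divergence_form :: "real \<Rightarrow> real \<Rightarrow> real \<Rightarrow> real \<Rightarrow> real \<Rightarrow> bool" where
  "divergence_form n a b c p \<longleftrightarrow>
     (\<exists>F :: real \<Rightarrow> real \<Rightarrow> real.
        (\<forall>x y. x > 0 \<longrightarrow> (\<lambda>(x, y). F x y) differentiable (at (x, y))) \<and>
        (\<forall>u. admissible u \<longrightarrow>
           (\<forall>(t, r)\<in>Omega.
              r powr (n - 1) * Eop n a b c p u t r =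
                pd_t (\<lambda>t r. r powr (n - 1) * pd 1 0 u t r) t r
                - pd_r (\<lambda>t r. r powr (n - 1) * F (u t r) (pd 0 1 u t r)) t r)))"

definition quasilinear_hyperbolic :: "real \<Rightarrow> real \<Rightarrow> bool" where
  "quasilinear_hyperbolic b p \<longleftrightarrow> b * p \<noteq> 0"

end

theory Submission
  imports Defs
begin

(*
  Easy direction.  If a = p b then r^(n-1) E[u] = (r^(n-1) u_t)_t - (r^(n-1) (c + b u^p) u_r)_r,
  which is at once a divergence form and a kinematic law with multiplier r^(n-1).

  Divergence form forces a = p b: on the profiles u = exp (r + C), where u_r = u_rr = u, the
  identity becomes an ODE relation for h z = F z z; comparing two radii gives
  h z = (c + b z^p) z, and then the relation at z = r = 1 reads a = p b.

  Integrate alpha E[u] over a small square R for the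
  family u_e = lam exp (k r) + e A(t) C(r), where A, C are high powers of sine bumps that vanish
  to high order on the boundary of R.  By the divergence theorem the integral only sees the
  finite jets of u_e on the boundary, which do not depend on e; differentiating at e = 0 and
  integrating by parts gives  int_R Phi A C = 0, where Phi is the formal adjoint of the
  linearisation of E at lam exp (k r), applied to alpha.  Since A C >= 0 concentrates at the
  centre of R, Phi vanishes identically for all lam > 0 and all k; comparing coefficients in
  lam and k then forces alpha = 0 unless a = p b.
*)

section \<open>The half plane and partial derivatives\<close>

lemma Omega_iff[simp]: "(t, r) \<in> Omega \<longleftrightarrow> r > 0"
  by (simp add: Omega_def)

lemma open_Omega: "open Omega"
proof -
  have "Omega = {x. 0 < snd x}" by (auto simp: Omega_def)
  moreover have "open {x::real\<times>real. 0 < snd x}"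
    by (rule open_Collect_less) (auto intro: continuous_intros)
  ultimately show ?thesis by simp
qed

lemma pd_0_0[simp]: "pd 0 0 f = f" by (simp add: pd_def)

lemma pd_r_pd: "pd i j (pd_r f) = pd i (Suc j) f"
  by (simp only: pd_def funpow_Suc_right comp_def)

lemma pd_t_pd: "pd i 0 (pd_t f) = pd (Suc i) 0 f"
  by (simp add: pd_def funpow_Suc_right del: funpow.simps)

lemma pd_1_0: "pd 1 0 F = pd_t F" by (simp add: pd_def)
lemma pd_0_1: "pd 0 1 F = pd_r F" by (simp add: pd_def)

lemma pd_1_0_eq: "((\<lambda>s. F s r) has_real_derivative D) (at t) \<Longrightarrow> pd 1 0 F t r = D"
  by (simp add: pd_def pd_t_def DERIV_imp_deriv)

lemma pd_0_1_eq: "((\<lambda>x. F t x) has_real_derivative D) (at r) \<Longrightarrow> pd 0 1 F t r = D"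
  by (simp add: pd_def pd_r_def DERIV_imp_deriv)

lemma pd_r_local:
  assumes "\<And>t r. r > 0 \<Longrightarrow> f t r = g t r" "r > 0"
  shows "pd_r f t r = pd_r g t r"
  unfolding pd_r_def
proof (rule deriv_cong_ev[OF _ refl])
  have "eventually (\<lambda>x. x \<in> {0<..}) (nhds r)" using assms(2)
    by (intro eventually_nhds_in_open) auto
  then show "eventually (\<lambda>x. f t x = g t x) (nhds r)"
    by eventually_elim (use assms(1) in auto)
qed

lemma pd_t_local:
  assumes "\<And>t r. r > 0 \<Longrightarrow> f t r = g t r" "r > 0"
  shows "pd_t f t r = pd_t g t r"
  unfolding pd_t_def using assms by simp

lemma pd_local:
  assumes "\<And>t r. r > 0 \<Longrightarrow> f t r = g t r" "r > 0"
  shows "pd i j f t r = pd i j g t r"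
proof -
  have R: "\<And>t r. r > 0 \<Longrightarrow> (pd_r ^^ j) f t r = (pd_r ^^ j) g t r"
  proof (induction j)
    case 0 then show ?case using assms by simp
  next
    case (Suc j)
    have "(pd_r ^^ Suc j) f t r = pd_r ((pd_r ^^ j) f) t r" by simp
    also have "\<dots> = pd_r ((pd_r ^^ j) g) t r" by (rule pd_r_local[OF Suc.IH Suc.prems])
    finally show ?case by simp
  qed
  have "\<And>t r. r > 0 \<Longrightarrow> (pd_t ^^ i) ((pd_r ^^ j) f) t r = (pd_t ^^ i) ((pd_r ^^ j) g) t r"
  proof (induction i)
    case 0 then show ?case using R by simp
  next
    case (Suc i)
    have "(pd_t ^^ Suc i) ((pd_r ^^ j) f) t r = pd_t ((pd_t ^^ i) ((pd_r ^^ j) f)) t r" by simp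
    also have "\<dots> = pd_t ((pd_t ^^ i) ((pd_r ^^ j) g)) t r" by (rule pd_t_local[OF Suc.IH Suc.prems])
    finally show ?case by simp
  qed
  then show ?thesis using assms by (simp add: pd_def)
qed

lemma DERIV_local_pos:
  assumes "\<And>x. x > 0 \<Longrightarrow> f x = g x" "r > 0" "(g has_real_derivative D) (at r)"
  shows "(f has_real_derivative D) (at r)"
  by (rule has_field_derivative_transform_within_open[OF assms(3), of "{0<..}"])
     (use assms in auto)

section \<open>Finite-order smoothness on Omega\<close>

text \<open>Smoothness
  (\<open>smooth_on2 Omega\<close>) is \<open>C_Omega k\<close> for all k; working with finite k allows proofs of
  closure properties by induction on k.\<close>

definition C_Omega :: "nat \<Rightarrow> (real \<Rightarrow> real \<Rightarrow> real) \<Rightarrow> bool" where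
  "C_Omega k f \<longleftrightarrow> (\<forall>i j. i + j \<le> k \<longrightarrow> continuous_on Omega (\<lambda>(t, r). pd i j f t r) \<and>
     (\<forall>t r. r > 0 \<longrightarrow> ((\<lambda>s. pd i j f s r) has_real_derivative pd (Suc i) j f t r) (at t) \<and>
        ((\<lambda>x. pd i j f t x) has_real_derivative pd i (Suc j) f t r) (at r)))"

lemma C_Omega_mono: "C_Omega k f \<Longrightarrow> m \<le> k \<Longrightarrow> C_Omega m f"
  unfolding C_Omega_def by auto

lemma C_OmegaD:
  assumes "C_Omega k f" "i + j \<le> k"
  shows "continuous_on Omega (\<lambda>(t, r). pd i j f t r)"
    "r > 0 \<Longrightarrow> ((\<lambda>s. pd i j f s r) has_real_derivative pd (Suc i) j f t r) (at t)"
    "r > 0 \<Longrightarrow> ((\<lambda>x. pd i j f t x) has_real_derivative pd i (Suc j) f t r) (at r)"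
  using assms unfolding C_Omega_def by auto

lemma C_Omega_cont: "C_Omega k f \<Longrightarrow> continuous_on Omega (\<lambda>(t, r). f t r)"
  using C_OmegaD(1)[of k f 0 0] by simp

lemma C_Omega_dt: "C_Omega k f \<Longrightarrow> r > 0 \<Longrightarrow> ((\<lambda>s. f s r) has_real_derivative pd_t f t r) (at t)"
  using C_OmegaD(2)[of k f 0 0 r t] by (simp add: pd_def)

lemma C_Omega_dr: "C_Omega k f \<Longrightarrow> r > 0 \<Longrightarrow> ((\<lambda>x. f t x) has_real_derivative pd_r f t r) (at r)"
  using C_OmegaD(3)[of k f 0 0 r t] by (simp add: pd_def)

lemma C_Omega_from:
  assumes eq: "\<And>i j t r. r > 0 \<Longrightarrow> i + j \<le> Suc k \<Longrightarrow> pd i j g t r = P i j t r"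
    and cont: "\<And>i j. i + j \<le> k \<Longrightarrow> continuous_on Omega (\<lambda>(t, r). P i j t r)"
    and dt: "\<And>i j t r. i + j \<le> k \<Longrightarrow> r > 0 \<Longrightarrow> ((\<lambda>s. P i j s r) has_real_derivative P (Suc i) j t r) (at t)"
    and dr: "\<And>i j t r. i + j \<le> k \<Longrightarrow> r > 0 \<Longrightarrow> ((\<lambda>x. P i j t x) has_real_derivative P i (Suc j) t r) (at r)"
  shows "C_Omega k g"
  unfolding C_Omega_def
proof (intro allI impI conjI)
  fix i j assume ij: "i + j \<le> k"
  have eqij: "\<And>t r. r > 0 \<Longrightarrow> pd i j g t r = P i j t r" using eq ij by auto
  show "continuous_on Omega (\<lambda>(t, r). pd i j g t r)"
    by (rule continuous_on_cong[THEN iffD2, OF refl _ cont[OF ij]]) (auto simp: Omega_def eqij)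
  fix t r :: real assume r: "r > 0"
  have "(\<lambda>s. pd i j g s r) = (\<lambda>s. P i j s r)" using eq r ij by auto
  then show "((\<lambda>s. pd i j g s r) has_real_derivative pd (Suc i) j g t r) (at t)"
    using dt[OF ij r, of t] eq[OF r, of "Suc i" j] ij by simp
  show "((\<lambda>x. pd i j g t x) has_real_derivative pd i (Suc j) g t r) (at r)"
    by (rule DERIV_local_pos[of _ "\<lambda>x. P i j t x", OF _ r])
       (use eq ij dr[OF ij r, of t] eq[OF r, of i "Suc j"] in auto)
qed

lemma C_Omega_deriv_r: "C_Omega (Suc k) f \<Longrightarrow> C_Omega k (pd_r f)"
  unfolding C_Omega_def pd_r_pd by auto

text \<open>Mixed partial derivatives commute for \<open>C_Omega\<close> functions, because the definition
  asks the t-derivative of every r-derivative to exist as an honest derivative.\<close>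

lemma pd_r_iter_pd_t:
  assumes "C_Omega k f" "j \<le> k" "r > 0"
  shows "(pd_r ^^ j) (pd_t f) t r = pd 1 j f t r"
  using assms(2,3)
proof (induction j arbitrary: t r)
  case 0 then show ?case by (simp add: pd_def)
next
  case (Suc j)
  have "(pd_r ^^ Suc j) (pd_t f) t r = pd_r ((pd_r ^^ j) (pd_t f)) t r" by simp
  also have "\<dots> = pd_r (pd 1 j f) t r"
    by (rule pd_r_local) (use Suc in auto)
  also have "\<dots> = pd 1 (Suc j) f t r"
    unfolding pd_r_def by (rule DERIV_imp_deriv, rule C_OmegaD(3)[OF assms(1)]) (use Suc in auto)
  finally show ?case .
qed

lemma pd_pd_t:
  assumes "C_Omega k f" "j \<le> k" "r > 0"
  shows "pd i j (pd_t f) t r = pd (Suc i) j f t r"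
proof -
  have "pd i j (pd_t f) t r = pd i 0 ((pd_r ^^ j) (pd_t f)) t r" by (simp add: pd_def)
  also have "\<dots> = pd i 0 (pd 1 j f) t r"
    by (rule pd_local) (use pd_r_iter_pd_t[OF assms(1,2)] assms(3) in auto)
  also have "\<dots> = pd (Suc i) j f t r"
    by (simp add: pd_def funpow_Suc_right del: funpow.simps)
  finally show ?thesis .
qed

lemma C_Omega_deriv_t:
  assumes "C_Omega (Suc k) f" shows "C_Omega k (pd_t f)"
proof (rule C_Omega_from[where P="\<lambda>i j. pd (Suc i) j f"])
  show "\<And>i j t r. r > 0 \<Longrightarrow> i + j \<le> Suc k \<Longrightarrow> pd i j (pd_t f) t r = pd (Suc i) j f t r"
    using pd_pd_t[OF assms] by simp
qed (use C_OmegaD[OF assms] in simp_all)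

fun derivs_from :: "(real \<Rightarrow> real \<Rightarrow> real) \<Rightarrow> (real \<Rightarrow> real \<Rightarrow> real) \<Rightarrow> (real \<Rightarrow> real \<Rightarrow> real) \<Rightarrow>
    nat \<Rightarrow> nat \<Rightarrow> real \<Rightarrow> real \<Rightarrow> real" where
  "derivs_from f G H 0 0 = f"
| "derivs_from f G H (Suc i) 0 = pd i 0 G"
| "derivs_from f G H i (Suc j) = pd i j H"

lemma pd_eq_derivs_from:
  assumes eG: "\<And>t r. r > 0 \<Longrightarrow> pd_t f t r = G t r" and eH: "\<And>t r. r > 0 \<Longrightarrow> pd_r f t r = H t r"
    and r: "r > 0"
  shows "pd i j f t r = derivs_from f G H i j t r"
proof (cases j)
  case 0
  then show ?thesis
  proof (cases i)
    case (Suc i')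
    have "pd i j f t r = pd i' 0 (pd_t f) t r" using Suc 0 by (simp add: pd_t_pd)
    also have "\<dots> = pd i' 0 G t r" by (rule pd_local[OF eG r])
    finally show ?thesis using Suc 0 by simp
  qed simp
next
  case (Suc j')
  have "pd i j f t r = pd i j' (pd_r f) t r" using Suc by (simp add: pd_r_pd)
  also have "\<dots> = pd i j' H t r" by (rule pd_local[OF eH r])
  finally show ?thesis using Suc by simp
qed

lemma C_Omega_SucI:
  assumes cont: "continuous_on Omega (\<lambda>(t, r). f t r)"
    and dt: "\<And>t r. r > 0 \<Longrightarrow> ((\<lambda>s. f s r) has_real_derivative G t r) (at t)"
    and dr: "\<And>t r. r > 0 \<Longrightarrow> ((\<lambda>x. f t x) has_real_derivative H t r) (at r)"
    and G: "C_Omega k G" and H: "C_Omega k H"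
    and sym: "\<And>t r. r > 0 \<Longrightarrow> pd 0 1 G t r = pd 1 0 H t r"
  shows "C_Omega (Suc k) f"
proof (rule C_Omega_from[where P="derivs_from f G H"])
  show "\<And>i j t r. r > 0 \<Longrightarrow> i + j \<le> Suc (Suc k) \<Longrightarrow> pd i j f t r = derivs_from f G H i j t r"
    by (rule pd_eq_derivs_from) (auto simp: pd_t_def pd_r_def intro!: DERIV_imp_deriv dt dr)
  have symi: "pd i 1 G t r = pd (Suc i) 0 H t r" if "r > 0" for i t r
  proof -
    have "pd i 1 G t r = pd i 0 (pd 0 1 G) t r" by (simp add: pd_def)
    also have "\<dots> = pd i 0 (pd 1 0 H) t r" by (rule pd_local[OF sym that])
    also have "\<dots> = pd (Suc i) 0 H t r" by (simp add: pd_def funpow_Suc_right del: funpow.simps)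
    finally show ?thesis .
  qed
  fix i j
  assume ij: "i + j \<le> Suc k"
  show "continuous_on Omega (\<lambda>(t, r). derivs_from f G H i j t r)"
  proof (cases j)
    case 0 then show ?thesis using cont C_OmegaD(1)[OF G, of "i - 1" 0] ij by (cases i) auto
  next
    case (Suc j') then show ?thesis using C_OmegaD(1)[OF H, of i j'] ij by auto
  qed
  fix t r :: real assume r: "r > 0"
  show "((\<lambda>s. derivs_from f G H i j s r) has_real_derivative derivs_from f G H (Suc i) j t r) (at t)"
  proof (cases j)
    case 0 then show ?thesis using dt[OF r] C_OmegaD(2)[OF G, of "i - 1" 0 r t] ij r by (cases i) auto
  next
    case (Suc j') then show ?thesis using C_OmegaD(2)[OF H, of i j' r t] ij r by auto
  qed
  show "((\<lambda>x. derivs_from f G H i j t x) has_real_derivative derivs_from f G H i (Suc j) t r) (at r)"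
  proof (cases j)
    case 0
    then show ?thesis
      using dr[OF r] C_OmegaD(3)[OF G, of "i - 1" 0 r t] ij r symi[OF r, of "i - 1"] by (cases i) auto
  next
    case (Suc j') then show ?thesis using C_OmegaD(3)[OF H, of i j' r t] ij r by auto
  qed
qed

lemma C_Omega_0I:
  assumes cont: "continuous_on Omega (\<lambda>(t, r). f t r)"
    and dt: "\<And>t r. r > 0 \<Longrightarrow> ((\<lambda>s. f s r) has_real_derivative G t r) (at t)"
    and dr: "\<And>t r. r > 0 \<Longrightarrow> ((\<lambda>x. f t x) has_real_derivative H t r) (at r)"
  shows "C_Omega 0 f"
proof -
  have eG: "\<And>t r. r > 0 \<Longrightarrow> pd 1 0 f t r = G t r" by (rule pd_1_0_eq[OF dt])
  have eH: "\<And>t r. r > 0 \<Longrightarrow> pd 0 1 f t r = H t r" by (rule pd_0_1_eq[OF dr])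
  show ?thesis unfolding C_Omega_def using cont dt dr eG eH by auto
qed

lemma C_Omega_SucD:
  assumes "C_Omega (Suc k) f" "r > 0"
  shows "((\<lambda>x. pd_t f t x) has_real_derivative pd_t (pd_r f) t r) (at r)"
    "((\<lambda>s. pd_r f s r) has_real_derivative pd_t (pd_r f) t r) (at t)"
  using C_OmegaD(3)[OF assms(1), of 1 0 r t] C_OmegaD(2)[OF assms(1), of 0 1 r t] assms(2)
  by (auto simp: pd_def)

lemma smooth_on2_iff_C_Omega: "smooth_on2 Omega f \<longleftrightarrow> (\<forall>k. C_Omega k f)"
proof
  assume h: "smooth_on2 Omega f"
  show "\<forall>k. C_Omega k f" unfolding C_Omega_def
  proof (intro allI impI conjI)
    fix k i j :: nat
    show "continuous_on Omega (\<lambda>(t, r). pd i j f t r)" using h by (simp add: smooth_on2_def)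
    fix t r :: real assume r: "r > 0"
    have "\<forall>x\<in>Omega. case x of (t, r) \<Rightarrow> ((\<lambda>s. pd i j f s r) has_real_derivative pd (Suc i) j f t r) (at t) \<and>
          ((\<lambda>x. pd i j f t x) has_real_derivative pd i (Suc j) f t r) (at r)"
      using h by (simp add: smooth_on2_def)
    from bspec[OF this, of "(t, r)"] r
    show "((\<lambda>s. pd i j f s r) has_real_derivative pd (Suc i) j f t r) (at t)"
      "((\<lambda>x. pd i j f t x) has_real_derivative pd i (Suc j) f t r) (at r)" by auto
  qed
next
  assume a: "\<forall>k. C_Omega k f"
  show "smooth_on2 Omega f" unfolding smooth_on2_def
  proof (intro allI conjI ballI)
    fix i j
    have s: "C_Omega (i + j) f" using a by blast
    show "continuous_on Omega (\<lambda>(t, r). pd i j f t r)" using C_OmegaD(1)[OF s] by simp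
    fix x assume "x \<in> Omega"
    then obtain t r where x: "x = (t, r)" "r > 0" by (cases x) auto
    show "case x of (t, r) \<Rightarrow> ((\<lambda>s. pd i j f s r) has_real_derivative pd (Suc i) j f t r) (at t) \<and>
          ((\<lambda>x. pd i j f t x) has_real_derivative pd i (Suc j) f t r) (at r)"
      using C_OmegaD(2,3)[OF s order_refl x(2)] x(1) by simp
  qed
qed

lemma smooth_der:
  assumes "smooth_on2 Omega f" "r > 0"
  shows "((\<lambda>s. pd i j f s r) has_real_derivative pd (Suc i) j f t r) (at t)"
    "((\<lambda>x. pd i j f t x) has_real_derivative pd i (Suc j) f t r) (at r)"
  using assms unfolding smooth_on2_iff_C_Omega using C_OmegaD(2,3)[of "i + j" f i j r t] by auto

lemma smooth_cont:
  assumes "smooth_on2 Omega f"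
  shows "continuous_on Omega (\<lambda>(t, r). pd i j f t r)"
  using assms unfolding smooth_on2_def by blast

lemma admissible_C_Omega: "admissible u \<Longrightarrow> C_Omega k u"
  unfolding admissible_def smooth_on2_iff_C_Omega by blast

lemma admissible_pos: "admissible u \<Longrightarrow> r > 0 \<Longrightarrow> u t r > 0"
  unfolding admissible_def by auto

lemma continuous_on_Omega_mult:
  fixes f g :: "real \<Rightarrow> real \<Rightarrow> real"
  assumes "continuous_on Omega (\<lambda>(t, r). f t r)" "continuous_on Omega (\<lambda>(t, r). g t r)"
  shows "continuous_on Omega (\<lambda>(t, r). f t r * g t r)"
  using continuous_on_mult[OF assms] by (simp add: split_beta)

lemma continuous_on_Omega_add:
  fixes f g :: "real \<Rightarrow> real \<Rightarrow> real"
  assumes "continuous_on Omega (\<lambda>(t, r). f t r)" "continuous_on Omega (\<lambda>(t, r). g t r)"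
  shows "continuous_on Omega (\<lambda>(t, r). f t r + g t r)"
  using continuous_on_add[OF assms] by (simp add: split_beta)

lemma continuous_on_Omega_powr:
  fixes f :: "real \<Rightarrow> real \<Rightarrow> real"
  assumes "continuous_on Omega (\<lambda>(t, r). f t r)" "\<And>t r. r > 0 \<Longrightarrow> f t r > 0"
  shows "continuous_on Omega (\<lambda>(t, r). f t r powr q)"
proof -
  have "continuous_on Omega (\<lambda>x. (case x of (t, r) \<Rightarrow> f t r) powr q)"
    by (rule continuous_on_powr[OF assms(1) continuous_on_const])
       (auto simp: Omega_def dest!: assms(2)[THEN less_imp_neq])
  then show ?thesis by (simp add: split_beta)
qed

lemma DERIV_sum_of_products:
  assumes "(f has_real_derivative A) (at x)" "(g has_real_derivative B) (at x)"
    "(p has_real_derivative C) (at x)" "(q has_real_derivative D) (at x)"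
  shows "((\<lambda>y. f y * g y + p y * q y) has_real_derivative (A * g x + f x * B) + (C * q x + p x * D)) (at x)"
  by (rule DERIV_cong[OF DERIV_add[OF DERIV_mult[OF assms(1,2)] DERIV_mult[OF assms(3,4)]]])
     (simp add: algebra_simps)

lemma C_Omega_const: "C_Omega k (\<lambda>t r. c)"
proof (induction k arbitrary: c)
  case 0 show ?case
    by (rule C_Omega_0I[where G="\<lambda>_ _. 0" and H="\<lambda>_ _. 0"]) (auto intro: continuous_intros)
next
  case (Suc k) show ?case
    by (rule C_Omega_SucI[where G="\<lambda>_ _. 0" and H="\<lambda>_ _. 0", OF _ _ _ Suc.IH Suc.IH])
       (auto intro: continuous_intros simp: pd_def pd_t_def pd_r_def)
qed

lemma C_Omega_add: "C_Omega k f \<Longrightarrow> C_Omega k g \<Longrightarrow> C_Omega k (\<lambda>t r. f t r + g t r)"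
proof (induction k arbitrary: f g)
  case 0 show ?case
    by (rule C_Omega_0I[where G="\<lambda>t r. pd_t f t r + pd_t g t r" and H="\<lambda>t r. pd_r f t r + pd_r g t r"])
       (auto intro!: continuous_on_Omega_add[OF C_Omega_cont[OF 0(1)] C_Omega_cont[OF 0(2)]]
        DERIV_add C_Omega_dt[OF 0(1)] C_Omega_dt[OF 0(2)] C_Omega_dr[OF 0(1)] C_Omega_dr[OF 0(2)])
next
  case (Suc k)
  note f = Suc.prems(1) and g = Suc.prems(2)
  show ?case
  proof (rule C_Omega_SucI[where G="\<lambda>t r. pd_t f t r + pd_t g t r" and H="\<lambda>t r. pd_r f t r + pd_r g t r"])
    show "continuous_on Omega (\<lambda>(t, r). f t r + g t r)"
      by (rule continuous_on_Omega_add[OF C_Omega_cont[OF f] C_Omega_cont[OF g]])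
    show "C_Omega k (\<lambda>t r. pd_t f t r + pd_t g t r)"
      by (rule Suc.IH[OF C_Omega_deriv_t[OF f] C_Omega_deriv_t[OF g]])
    show "C_Omega k (\<lambda>t r. pd_r f t r + pd_r g t r)"
      by (rule Suc.IH[OF C_Omega_deriv_r[OF f] C_Omega_deriv_r[OF g]])
    fix t r :: real assume r: "r > 0"
    show "((\<lambda>s. f s r + g s r) has_real_derivative pd_t f t r + pd_t g t r) (at t)"
      by (rule DERIV_add[OF C_Omega_dt[OF f r] C_Omega_dt[OF g r]])
    show "((\<lambda>x. f t x + g t x) has_real_derivative pd_r f t r + pd_r g t r) (at r)"
      by (rule DERIV_add[OF C_Omega_dr[OF f r] C_Omega_dr[OF g r]])
    have "pd 0 1 (\<lambda>t r. pd_t f t r + pd_t g t r) t r = pd_t (pd_r f) t r + pd_t (pd_r g) t r"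
      by (rule pd_0_1_eq, rule DERIV_add[OF C_Omega_SucD(1)[OF f r] C_Omega_SucD(1)[OF g r]])
    also have "\<dots> = pd 1 0 (\<lambda>t r. pd_r f t r + pd_r g t r) t r"
      by (rule pd_1_0_eq[symmetric], rule DERIV_add[OF C_Omega_SucD(2)[OF f r] C_Omega_SucD(2)[OF g r]])
    finally show "pd 0 1 (\<lambda>t r. pd_t f t r + pd_t g t r) t r = pd 1 0 (\<lambda>t r. pd_r f t r + pd_r g t r) t r" .
  qed
qed

lemma C_Omega_mult: "C_Omega k f \<Longrightarrow> C_Omega k g \<Longrightarrow> C_Omega k (\<lambda>t r. f t r * g t r)"
proof (induction k arbitrary: f g)
  case 0 show ?case
  proof (rule C_Omega_0I[where G="\<lambda>t r. pd_t f t r * g t r + f t r * pd_t g t r"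
        and H="\<lambda>t r. pd_r f t r * g t r + f t r * pd_r g t r"])
    show "continuous_on Omega (\<lambda>(t, r). f t r * g t r)"
      by (rule continuous_on_Omega_mult[OF C_Omega_cont[OF 0(1)] C_Omega_cont[OF 0(2)]])
    fix t r :: real assume r: "r > 0"
    show "((\<lambda>s. f s r * g s r) has_real_derivative pd_t f t r * g t r + f t r * pd_t g t r) (at t)"
      using DERIV_mult[OF C_Omega_dt[OF 0(1) r] C_Omega_dt[OF 0(2) r]] by (simp add: algebra_simps)
    show "((\<lambda>x. f t x * g t x) has_real_derivative pd_r f t r * g t r + f t r * pd_r g t r) (at r)"
      using DERIV_mult[OF C_Omega_dr[OF 0(1) r] C_Omega_dr[OF 0(2) r]] by (simp add: algebra_simps)
  qed
next
  case (Suc k)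
  note f = Suc.prems(1) and g = Suc.prems(2)
  have f': "C_Omega k f" and g': "C_Omega k g" using f g C_Omega_mono by auto
  show ?case
  proof (rule C_Omega_SucI[where G="\<lambda>t r. pd_t f t r * g t r + f t r * pd_t g t r"
        and H="\<lambda>t r. pd_r f t r * g t r + f t r * pd_r g t r"])
    show "continuous_on Omega (\<lambda>(t, r). f t r * g t r)"
      by (rule continuous_on_Omega_mult[OF C_Omega_cont[OF f] C_Omega_cont[OF g]])
    show "C_Omega k (\<lambda>t r. pd_t f t r * g t r + f t r * pd_t g t r)"
      by (rule C_Omega_add[OF Suc.IH[OF C_Omega_deriv_t[OF f] g'] Suc.IH[OF f' C_Omega_deriv_t[OF g]]])
    show "C_Omega k (\<lambda>t r. pd_r f t r * g t r + f t r * pd_r g t r)"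
      by (rule C_Omega_add[OF Suc.IH[OF C_Omega_deriv_r[OF f] g'] Suc.IH[OF f' C_Omega_deriv_r[OF g]]])
    fix t r :: real assume r: "r > 0"
    show "((\<lambda>s. f s r * g s r) has_real_derivative pd_t f t r * g t r + f t r * pd_t g t r) (at t)"
      using DERIV_mult[OF C_Omega_dt[OF f r] C_Omega_dt[OF g r]] by (simp add: algebra_simps)
    show "((\<lambda>x. f t x * g t x) has_real_derivative pd_r f t r * g t r + f t r * pd_r g t r) (at r)"
      using DERIV_mult[OF C_Omega_dr[OF f r] C_Omega_dr[OF g r]] by (simp add: algebra_simps)
    have X: "pd 0 1 (\<lambda>t r. pd_t f t r * g t r + f t r * pd_t g t r) t r =
      (pd_t (pd_r f) t r * g t r + pd_t f t r * pd_r g t r) + (pd_r f t r * pd_t g t r + f t r * pd_t (pd_r g) t r)"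
      by (rule pd_0_1_eq, rule DERIV_sum_of_products[OF C_Omega_SucD(1)[OF f r] C_Omega_dr[OF g r]
            C_Omega_dr[OF f r] C_Omega_SucD(1)[OF g r]])
    have Y: "pd 1 0 (\<lambda>t r. pd_r f t r * g t r + f t r * pd_r g t r) t r =
      (pd_t (pd_r f) t r * g t r + pd_r f t r * pd_t g t r) + (pd_t f t r * pd_r g t r + f t r * pd_t (pd_r g) t r)"
      by (rule pd_1_0_eq, rule DERIV_sum_of_products[OF C_Omega_SucD(2)[OF f r] C_Omega_dt[OF g r]
            C_Omega_dt[OF f r] C_Omega_SucD(2)[OF g r]])
    show "pd 0 1 (\<lambda>t r. pd_t f t r * g t r + f t r * pd_t g t r) t r =
       pd 1 0 (\<lambda>t r. pd_r f t r * g t r + f t r * pd_r g t r) t r" unfolding X Y by simp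
  qed
qed

lemma DERIV_scaled_powr_mult:
  assumes "(a has_real_derivative A) (at x)" "(b has_real_derivative B) (at x)" "a x > 0"
  shows "((\<lambda>y. (q * a y powr (q - 1)) * b y) has_real_derivative
     (q * ((q - 1) * a x powr (q - 1 - 1) * A)) * b x + (q * a x powr (q - 1)) * B) (at x)"
  by (rule DERIV_cong[OF DERIV_mult[OF DERIV_cmult[OF DERIV_fun_powr[OF assms(1,3)]] assms(2)]])
     (simp add: algebra_simps)

lemma C_Omega_powr: "C_Omega k f \<Longrightarrow> (\<And>t r. r > 0 \<Longrightarrow> f t r > 0) \<Longrightarrow> C_Omega k (\<lambda>t r. f t r powr q)"
proof (induction k arbitrary: q)
  case 0
  note f = 0(1) and pos = 0(2)
  show ?case
  proof (rule C_Omega_0I[where G="\<lambda>t r. (q * f t r powr (q - 1)) * pd_t f t r"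
        and H="\<lambda>t r. (q * f t r powr (q - 1)) * pd_r f t r"])
    show "continuous_on Omega (\<lambda>(t, r). f t r powr q)" by (rule continuous_on_Omega_powr[OF C_Omega_cont[OF f] pos])
    fix t r :: real assume r: "r > 0"
    show "((\<lambda>s. f s r powr q) has_real_derivative (q * f t r powr (q - 1)) * pd_t f t r) (at t)"
      using DERIV_fun_powr[OF C_Omega_dt[OF f r, where t=t] pos[OF r]] by simp
    show "((\<lambda>x. f t x powr q) has_real_derivative (q * f t r powr (q - 1)) * pd_r f t r) (at r)"
      using DERIV_fun_powr[OF C_Omega_dr[OF f r, where t=t] pos[OF r]] by simp
  qed
next
  case (Suc k)
  note f = Suc.prems(1) and pos = Suc.prems(2)
  have f': "C_Omega k f" using f C_Omega_mono by auto
  show ?case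
  proof (rule C_Omega_SucI[where G="\<lambda>t r. (q * f t r powr (q - 1)) * pd_t f t r"
        and H="\<lambda>t r. (q * f t r powr (q - 1)) * pd_r f t r"])
    show "continuous_on Omega (\<lambda>(t, r). f t r powr q)" by (rule continuous_on_Omega_powr[OF C_Omega_cont[OF f] pos])
    show "C_Omega k (\<lambda>t r. (q * f t r powr (q - 1)) * pd_t f t r)"
      by (rule C_Omega_mult[OF C_Omega_mult[OF C_Omega_const Suc.IH[OF f' pos]] C_Omega_deriv_t[OF f]])
    show "C_Omega k (\<lambda>t r. (q * f t r powr (q - 1)) * pd_r f t r)"
      by (rule C_Omega_mult[OF C_Omega_mult[OF C_Omega_const Suc.IH[OF f' pos]] C_Omega_deriv_r[OF f]])
    fix t r :: real assume r: "r > 0"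
    show "((\<lambda>s. f s r powr q) has_real_derivative (q * f t r powr (q - 1)) * pd_t f t r) (at t)"
      using DERIV_fun_powr[OF C_Omega_dt[OF f r, where t=t] pos[OF r]] by simp
    show "((\<lambda>x. f t x powr q) has_real_derivative (q * f t r powr (q - 1)) * pd_r f t r) (at r)"
      using DERIV_fun_powr[OF C_Omega_dr[OF f r, where t=t] pos[OF r]] by simp
    have X: "pd 0 1 (\<lambda>t r. (q * f t r powr (q - 1)) * pd_t f t r) t r =
      (q * ((q - 1) * f t r powr (q - 1 - 1) * pd_r f t r)) * pd_t f t r + (q * f t r powr (q - 1)) * pd_t (pd_r f) t r"
      by (rule pd_0_1_eq, rule DERIV_scaled_powr_mult[OF C_Omega_dr[OF f r, where t=t] C_Omega_SucD(1)[OF f r, where t=t] pos[OF r]])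
    have Y: "pd 1 0 (\<lambda>t r. (q * f t r powr (q - 1)) * pd_r f t r) t r =
      (q * ((q - 1) * f t r powr (q - 1 - 1) * pd_t f t r)) * pd_r f t r + (q * f t r powr (q - 1)) * pd_t (pd_r f) t r"
      by (rule pd_1_0_eq, rule DERIV_scaled_powr_mult[OF C_Omega_dt[OF f r, where t=t] C_Omega_SucD(2)[OF f r, where t=t] pos[OF r]])
    show "pd 0 1 (\<lambda>t r. (q * f t r powr (q - 1)) * pd_t f t r) t r =
       pd 1 0 (\<lambda>t r. (q * f t r powr (q - 1)) * pd_r f t r) t r" unfolding X Y by simp
  qed
qed

lemma C_Omega_radial:
  assumes d: "\<And>r. r > 0 \<Longrightarrow> (g has_real_derivative g' r) (at r)"
    and g': "\<And>m. m < k \<Longrightarrow> C_Omega m (\<lambda>t r. g' r)"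
  shows "C_Omega k (\<lambda>t r. g r)"
proof -
  have cont: "continuous_on Omega (\<lambda>(t, r). g r)"
  proof -
    have "continuous_on {0<..} g"
      by (intro continuous_at_imp_continuous_on ballI DERIV_isCont[OF d]) auto
    then have "continuous_on Omega (\<lambda>x. g (snd x))"
      by (rule continuous_on_compose2[OF _ continuous_on_snd[OF continuous_on_id]]) (auto simp: Omega_def)
    then show ?thesis by (simp add: split_beta)
  qed
  show ?thesis
  proof (cases k)
    case 0 show ?thesis unfolding 0
      by (rule C_Omega_0I[where G="\<lambda>_ _. 0" and H="\<lambda>t r. g' r"]) (use cont d in auto)
  next
    case (Suc m) show ?thesis unfolding Suc
      by (rule C_Omega_SucI[where G="\<lambda>_ _. 0" and H="\<lambda>t r. g' r", OF cont _ d C_Omega_const g'])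
         (auto simp: Suc pd_def pd_t_def pd_r_def)
  qed
qed

lemma C_Omega_r: "C_Omega k (\<lambda>t r. r)"
  by (rule C_Omega_radial[where g'="\<lambda>_. 1"]) (auto intro: C_Omega_const)

lemma C_Omega_rpow: "C_Omega k (\<lambda>t r. r powr q)"
  by (rule C_Omega_powr[OF C_Omega_r]) simp

lemma C_Omega_exp: "C_Omega k (\<lambda>t r. exp (r + C))"
proof (induction k)
  case 0 show ?case
    by (rule C_Omega_radial[where g'="\<lambda>r. exp (r + C)"]) (auto intro!: derivative_eq_intros)
next
  case (Suc k) show ?case
    by (rule C_Omega_radial[where g'="\<lambda>r. exp (r + C)"])
       (auto intro!: derivative_eq_intros C_Omega_mono[OF Suc.IH])
qed

section \<open>The easy direction: a = p b gives a conservation law\<close>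

text \<open>For \<open>a = p b\<close> the operator is, up to the factor \<open>r^(n-1)\<close>, the divergence of the
  density \<open>r^(n-1) u_t\<close> and the flux \<open>r^(n-1) (c + b u^p) u_r\<close>.\<close>

lemma density_has_deriv:
  assumes u: "admissible u" and r: "r > 0"
  shows "((\<lambda>s. r powr (n - 1) * pd 1 0 u s r) has_real_derivative r powr (n - 1) * pd 2 0 u t r) (at t)"
  using C_OmegaD(2)[OF admissible_C_Omega[OF u, of 2], of 1 0 r t] r
  by (intro DERIV_cmult) (simp add: numeral_2_eq_2)

lemma flux_has_deriv:
  assumes u: "admissible u" and r: "r > 0"
  shows "((\<lambda>x. x powr (n - 1) * ((c + b * u t x powr p) * pd 0 1 u t x)) has_real_derivative
    (n - 1) * r powr (n - 1 - 1) * ((c + b * u t r powr p) * pd 0 1 u t r) +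
      r powr (n - 1) * ((b * (p * u t r powr (p - 1) * pd 0 1 u t r)) * pd 0 1 u t r
        + (c + b * u t r powr p) * pd 0 2 u t r)) (at r)"
proof -
  have s: "C_Omega 2 u" by (rule admissible_C_Omega[OF u])
  have du: "((\<lambda>x. u t x) has_real_derivative pd 0 1 u t r) (at r)"
    using C_OmegaD(3)[OF s, of 0 0 r t] r by simp
  have dur: "((\<lambda>x. pd 0 1 u t x) has_real_derivative pd 0 2 u t r) (at r)"
    using C_OmegaD(3)[OF s, of 0 1 r t] r by (simp add: numeral_2_eq_2)
  have dU: "((\<lambda>x. u t x powr p) has_real_derivative p * u t r powr (p - 1) * pd 0 1 u t r) (at r)"
    using DERIV_fun_powr[OF du admissible_pos[OF u r]] by simp
  show ?thesis
    by (rule DERIV_cong[OF DERIV_mult[OF has_real_derivative_powr[OF r]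
          DERIV_mult[OF DERIV_add[OF DERIV_const DERIV_cmult[OF dU]] dur]]])
       (simp add: algebra_simps)
qed

lemma radial_divergence_identity:
  assumes a: "a = p * b" and u: "admissible u" and r: "r > 0"
  shows "r powr (n - 1) * Eop n a b c p u t r =
     pd_t (\<lambda>t r. r powr (n - 1) * pd 1 0 u t r) t r
     - pd_r (\<lambda>t r. r powr (n - 1) * ((c + b * u t r powr p) * pd 0 1 u t r)) t r"
proof -
  have T: "pd_t (\<lambda>t r. r powr (n - 1) * pd 1 0 u t r) t r = r powr (n - 1) * pd 2 0 u t r"
    unfolding pd_t_def by (rule DERIV_imp_deriv[OF density_has_deriv[OF u r]])
  have X: "pd_r (\<lambda>t r. r powr (n - 1) * ((c + b * u t r powr p) * pd 0 1 u t r)) t r =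
    (n - 1) * r powr (n - 1 - 1) * ((c + b * u t r powr p) * pd 0 1 u t r) +
      r powr (n - 1) * ((b * (p * u t r powr (p - 1) * pd 0 1 u t r)) * pd 0 1 u t r
        + (c + b * u t r powr p) * pd 0 2 u t r)"
    unfolding pd_r_def by (rule DERIV_imp_deriv[OF flux_has_deriv[OF u r]])
  have e: "r powr (n - 1 - 1) = r powr (n - 1) / r" using r by (subst powr_diff) simp
  show ?thesis
    unfolding T X Eop_def e a using r by (simp add: field_simps power2_eq_square)
qed

lemma a_eq_pb_imp_divergence:
  assumes a: "a = p * b"
  shows "divergence_form n a b c p"
  unfolding divergence_form_def
proof (intro exI[of _ "\<lambda>x y. (c + b * x powr p) * y"] conjI allI impI ballI)
  fix x y :: real assume x: "x > 0"
  have d1: "(\<lambda>z::real \<times> real. fst z powr p) differentiable at (x, y)"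
    by (rule differentiableI, rule has_derivative_powr[OF has_derivative_fst[OF has_derivative_ident]
          has_derivative_const]) (use x in auto)
  have d2: "(\<lambda>z::real \<times> real. snd z) differentiable at (x, y)"
    by (rule differentiableI, rule has_derivative_snd[OF has_derivative_ident])
  have "(\<lambda>z::real \<times> real. (c + b * fst z powr p) * snd z) differentiable at (x, y)"
    by (intro differentiable_mult differentiable_add differentiable_const d1 d2)
  moreover have "(\<lambda>(x, y). (c + b * x powr p) * y) = (\<lambda>z::real \<times> real. (c + b * fst z powr p) * snd z)"
    by (auto simp: fun_eq_iff)
  ultimately show "(\<lambda>(x, y). (c + b * x powr p) * y) differentiable at (x, y)"
    by simp
next
  fix u :: "real \<Rightarrow> real \<Rightarrow> real" and z assume u: "admissible u" and "z \<in> Omega"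
  then obtain t r where z: "z = (t, r)" and r: "r > 0" by (cases z) auto
  show "case z of (t, r) \<Rightarrow>
        r powr (n - 1) * Eop n a b c p u t r =
        pd_t (\<lambda>t r. r powr (n - 1) * pd 1 0 u t r) t r -
        pd_r (\<lambda>t r. r powr (n - 1) * ((c + b * u t r powr p) * pd 0 1 u t r)) t r"
    unfolding z prod.case by (rule radial_divergence_identity[OF a u r])
qed

lemma a_eq_pb_imp_kinematic:
  assumes a: "a = p * b"
  shows "kinematic_cl n a b c p (\<lambda>t r. r powr (n - 1))"
  unfolding kinematic_cl_def
proof (intro conjI)
  show "smooth_on2 Omega (\<lambda>t r. r powr (n - 1))" unfolding smooth_on2_iff_C_Omega using C_Omega_rpow by blast
  show "\<exists>(t, r)\<in>Omega. r powr (n - 1) \<noteq> 0" by (rule bexI[of _ "(0, 1)"]) auto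
  define T where "T = (\<lambda>(t::real) (r::real) (J::nat\<Rightarrow>nat\<Rightarrow>real). r powr (n - 1) * J 1 0)"
  define X where "X = (\<lambda>(t::real) (r::real) (J::nat\<Rightarrow>nat\<Rightarrow>real). - (r powr (n - 1) * ((c + b * J 0 0 powr p) * J 0 1)))"
  have lT: "local_fun T" unfolding local_fun_def T_def by (rule exI[of _ 1]) auto
  have lX: "local_fun X" unfolding local_fun_def X_def by (rule exI[of _ 1]) auto
  have eT: "eval_df T u = (\<lambda>t r. r powr (n - 1) * pd 1 0 u t r)" for u
    by (simp add: eval_df_def jet_def T_def)
  have eX: "eval_df X u = (\<lambda>t r. (-1) * (r powr (n - 1) * ((c + b * u t r powr p) * pd 0 1 u t r)))" for u
    by (simp add: eval_df_def jet_def X_def)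
  have "\<forall>u. admissible u \<longrightarrow>
        smooth_on2 Omega (eval_df T u) \<and> smooth_on2 Omega (eval_df X u) \<and>
        (\<forall>(t, r)\<in>Omega. r powr (n - 1) * Eop n a b c p u t r = pd_t (eval_df T u) t r + pd_r (eval_df X u) t r)"
  proof (intro allI impI conjI ballI)
    fix u assume u: "admissible u"
    note su = admissible_C_Omega[OF u]
    show "smooth_on2 Omega (eval_df T u)" unfolding eT smooth_on2_iff_C_Omega pd_1_0
      using C_Omega_mult[OF C_Omega_rpow C_Omega_deriv_t[OF su]] by blast
    show "smooth_on2 Omega (eval_df X u)" unfolding eX smooth_on2_iff_C_Omega pd_0_1
      using C_Omega_mult[OF C_Omega_const C_Omega_mult[OF C_Omega_rpow
          C_Omega_mult[OF C_Omega_add[OF C_Omega_const C_Omega_mult[OF C_Omega_const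
          C_Omega_powr[OF su admissible_pos[OF u]]]] C_Omega_deriv_r[OF su]]]] by blast
    fix z assume "z \<in> Omega"
    then obtain t r where z: "z = (t, r)" and r: "r > 0" by (cases z) auto
    have X: "pd_r (eval_df X u) t r = - pd_r (\<lambda>t r. r powr (n - 1) * ((c + b * u t r powr p) * pd 0 1 u t r)) t r"
    proof -
      note fl = flux_has_deriv[OF u r, where t=t and n=n and c=c and b=b and p=p]
      show ?thesis unfolding pd_r_def eX
        using DERIV_imp_deriv[OF DERIV_cmult[OF fl, of "-1"]] DERIV_imp_deriv[OF fl] by simp
    qed
    show "case z of (t, r) \<Rightarrow> r powr (n - 1) * Eop n a b c p u t r = pd_t (eval_df T u) t r + pd_r (eval_df X u) t r"
      unfolding z prod.case X eT using radial_divergence_identity[OF a u r] by simp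
  qed
  then show "\<exists>T X. local_fun T \<and> local_fun X \<and>
      (\<forall>u. admissible u \<longrightarrow>
        smooth_on2 Omega (eval_df T u) \<and> smooth_on2 Omega (eval_df X u) \<and>
        (\<forall>(t, r)\<in>Omega. r powr (n - 1) * Eop n a b c p u t r = pd_t (eval_df T u) t r + pd_r (eval_df X u) t r))"
    using lT lX by blast
qed

section \<open>A divergence form forces a = p b\<close>

text \<open>The functions \<open>exp (r + C)\<close> have \<open>u_t = 0\<close> and \<open>u_r = u_rr = u\<close>; along them the
  divergence identity becomes an ODE relation for \<open>h z = F z z\<close>.\<close>

lemma pd_exp_profile:
  "pd 2 0 (\<lambda>t r. exp (r + C)) t r = 0"
  "pd 1 0 (\<lambda>t r. exp (r + C)) = (\<lambda>t r. 0)"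
  "pd 0 1 (\<lambda>t r. exp (r + C)) = (\<lambda>t r. exp (r + C))"
  "pd 0 2 (\<lambda>t r. exp (r + C)) = (\<lambda>t r. exp (r + C))"
proof -
  have t: "pd_t (\<lambda>t r. exp (r + C)) = (\<lambda>t r. 0)" "pd_t (\<lambda>t r. 0) = (\<lambda>t r. 0)"
    by (simp_all add: pd_t_def fun_eq_iff)
  have r: "pd_r (\<lambda>t r. exp (r + C)) = (\<lambda>t r. exp (r + C))"
    unfolding pd_r_def fun_eq_iff by (auto intro!: DERIV_imp_deriv derivative_eq_intros)
  show "pd 2 0 (\<lambda>t r. exp (r + C)) t r = 0"
    "pd 1 0 (\<lambda>t r. exp (r + C)) = (\<lambda>t r. 0)"
    "pd 0 1 (\<lambda>t r. exp (r + C)) = (\<lambda>t r. exp (r + C))"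
    "pd 0 2 (\<lambda>t r. exp (r + C)) = (\<lambda>t r. exp (r + C))"
    by (simp_all add: pd_def numeral_2_eq_2 t r)
qed

lemma admissible_exp: "admissible (\<lambda>t r. exp (r + C))"
  unfolding admissible_def smooth_on2_iff_C_Omega using C_Omega_exp by auto

lemma divergence_form_on_exp_profile:
  assumes Fi: "\<forall>u. admissible u \<longrightarrow> (\<forall>(t, r)\<in>Omega. r powr (n - 1) * Eop n a b c p u t r =
      pd_t (\<lambda>t r. r powr (n - 1) * pd 1 0 u t r) t r - pd_r (\<lambda>t r. r powr (n - 1) * F (u t r) (pd 0 1 u t r)) t r)"
    and hd: "((\<lambda>z. F z z) has_real_derivative h') (at z)" and z: "z > 0" and r: "r > 0"
  shows "(c + b * z powr p) * (1 + (n - 1) / r) * z + a * z powr (p - 1) * z\<^sup>2 = (n - 1) / r * F z z + h' * z"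
proof -
  define C where "C = ln z - r"
  define u where "u = (\<lambda>(t::real) r. exp (r + C))"
  have ez: "exp (r + C) = z" using z by (simp add: C_def)
  have I: "r powr (n - 1) * Eop n a b c p u 0 r =
    pd_t (\<lambda>t r. r powr (n - 1) * pd 1 0 u t r) 0 r - pd_r (\<lambda>t r. r powr (n - 1) * F (u t r) (pd 0 1 u t r)) 0 r"
    using Fi[rule_format, OF admissible_exp[of C], of "(0, r)"] r unfolding u_def by simp
  have density: "pd_t (\<lambda>t r. r powr (n - 1) * pd 1 0 u t r) 0 r = 0"
    unfolding u_def pd_exp_profile by (simp add: pd_t_def)
  have "((\<lambda>x. x powr (n - 1) * F (exp (x + C)) (exp (x + C))) has_real_derivative
      (n - 1) * r powr (n - 1 - 1) * F z z + r powr (n - 1) * (h' * z)) (at r)"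
  proof -
    have de: "((\<lambda>x. exp (x + C)) has_real_derivative z) (at r)"
      using ez by (auto intro!: derivative_eq_intros)
    have dh: "((\<lambda>x. F (exp (x + C)) (exp (x + C))) has_real_derivative h' * z) (at r)"
      using DERIV_chain2[OF hd[folded ez] de] ez by simp
    show ?thesis
      using DERIV_mult[OF has_real_derivative_powr[OF r, of "n - 1"] dh] ez by (simp add: algebra_simps)
  qed
  then have flux: "pd_r (\<lambda>t r. r powr (n - 1) * F (u t r) (pd 0 1 u t r)) 0 r =
      (n - 1) * r powr (n - 1 - 1) * F z z + r powr (n - 1) * (h' * z)"
    unfolding u_def pd_exp_profile pd_r_def by (rule DERIV_imp_deriv)
  have E: "Eop n a b c p u 0 r = 0 - (c + b * z powr p) * (z + (n - 1) / r * z) - a * z powr (p - 1) * z\<^sup>2"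
    unfolding Eop_def u_def pd_exp_profile ez by simp
  define R where "R = r powr (n - 1)"
  define m where "m = (n - 1) / r"
  have "r powr (n - 1 - 1) = R / r" using r unfolding R_def by (subst powr_diff) simp
  then have e: "(n - 1) * r powr (n - 1 - 1) = R * m" by (simp add: m_def)
  have "R * ((c + b * z powr p) * (1 + m) * z + a * z powr (p - 1) * z\<^sup>2) = R * (m * F z z + h' * z)"
    using I unfolding density flux E e R_def[symmetric] m_def[symmetric] by (simp add: algebra_simps)
  then show ?thesis using r by (simp add: R_def m_def)
qed

text \<open>Eliminating an unknown from an affine relation observed for two values of a parameter.\<close>

lemma two_point_elim:
  fixes X q z W H E :: real
  assumes "X * (1 + q / 1) * z + W = q / 1 * H + E" "X * (1 + q / 2) * z + W = q / 2 * H + E"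
  shows "q * (H - X * z) = 0"
proof -
  have "q * (H - X * z) = - 2 * ((X * (1 + q / 1) * z + W - (q / 1 * H + E)) - (X * (1 + q / 2) * z + W - (q / 2 * H + E)))"
    by (simp add: field_simps)
  then show ?thesis using assms by simp
qed

lemma divergence_imp_a_eq_pb:
  assumes n: "n \<noteq> 1" and d: "divergence_form n a b c p"
  shows "a = p * b"
proof -
  obtain F where Fd: "\<forall>x y. x > 0 \<longrightarrow> (\<lambda>(x, y). F x y) differentiable at (x, y)"
    and Fi: "\<forall>u. admissible u \<longrightarrow> (\<forall>(t, r)\<in>Omega. r powr (n - 1) * Eop n a b c p u t r =
      pd_t (\<lambda>t r. r powr (n - 1) * pd 1 0 u t r) t r - pd_r (\<lambda>t r. r powr (n - 1) * F (u t r) (pd 0 1 u t r)) t r)"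
    using d unfolding divergence_form_def by blast
  define h where "h z = F z z" for z
  have hd: "(h has_real_derivative deriv h z) (at z)" if z: "z > 0" for z
  proof -
    have "(\<lambda>w. (\<lambda>(x, y). F x y) (w, w)) differentiable at z"
      using Fd z by (intro differentiable_compose[of "\<lambda>(x, y). F x y" "\<lambda>w. (w, w)"])
        (auto intro!: derivative_intros differentiableI)
    then show ?thesis by (simp add: h_def[abs_def] DERIV_deriv_iff_real_differentiable)
  qed
  note key = divergence_form_on_exp_profile[OF Fi hd[unfolded h_def], folded h_def]
  text \<open>Two values of r determine h; then r = 1 at z = 1 gives a relation for a.\<close>
  have hz: "h z = (c + b * z powr p) * z" if z: "z > 0" for z
  proof -
    have "(n - 1) * (h z - (c + b * z powr p) * z) = 0"
      by (rule two_point_elim[OF key[OF z z, of 1] key[OF z z, of 2]]) auto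
    then show ?thesis using n by simp
  qed
  have "((\<lambda>z. (c + b * z powr p) * z) has_real_derivative c + b + b * p) (at 1)"
    by (auto intro!: derivative_eq_intros simp: algebra_simps)
  moreover have "((\<lambda>z. (c + b * z powr p) * z) has_real_derivative deriv h 1) (at 1)"
    by (rule has_field_derivative_transform_within_open[OF hd[of 1], of "{0<..}"]) (auto simp: hz)
  ultimately have dh1: "deriv h 1 = c + b + b * p" using DERIV_unique by blast
  have "(c + b * 1 powr p) * (1 + (n - 1) / 1) * 1 + a * 1 powr (p - 1) * 1\<^sup>2 = (n - 1) / 1 * h 1 + deriv h 1 * 1"
    by (rule key) auto
  then show ?thesis unfolding dh1 hz[of 1, simplified] by (simp add: algebra_simps)
qed

section \<open>Smooth functions of one variable and separable functions\<close>

fun Ck_real :: "nat \<Rightarrow> (real \<Rightarrow> real) \<Rightarrow> bool" where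
  "Ck_real 0 f = True"
| "Ck_real (Suc k) f = ((\<forall>x. (f has_real_derivative deriv f x) (at x)) \<and> Ck_real k (deriv f))"

definition smooth_real :: "(real \<Rightarrow> real) \<Rightarrow> bool" where
  "smooth_real f \<longleftrightarrow> (\<forall>k. Ck_real k f)"

lemma Ck_real_intro:
  assumes "\<And>x. (f has_real_derivative f' x) (at x)" "Ck_real k f'"
  shows "Ck_real (Suc k) f"
proof -
  have "deriv f = f'" using assms(1) by (auto intro!: DERIV_imp_deriv)
  then show ?thesis using assms by simp
qed

lemma Ck_real_mono: "Ck_real (Suc k) f \<Longrightarrow> Ck_real k f"
proof (induction k arbitrary: f)
  case 0 then show ?case by simp
next
  case (Suc k) then show ?case by auto
qed

lemma Ck_real_const: "Ck_real k (\<lambda>x. c)"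
proof (induction k arbitrary: c)
  case 0 then show ?case by simp
next
  case (Suc k) show ?case by (rule Ck_real_intro[where f'="\<lambda>x. 0"]) (auto intro: Suc.IH)
qed

lemma Ck_real_add: "Ck_real k f \<Longrightarrow> Ck_real k g \<Longrightarrow> Ck_real k (\<lambda>x. f x + g x)"
proof (induction k arbitrary: f g)
  case 0 then show ?case by simp
next
  case (Suc k)
  show ?case
    by (rule Ck_real_intro[where f'="\<lambda>x. deriv f x + deriv g x"])
       (use Suc in \<open>auto intro!: DERIV_add Suc.IH\<close>)
qed

lemma Ck_real_mult: "Ck_real k f \<Longrightarrow> Ck_real k g \<Longrightarrow> Ck_real k (\<lambda>x. f x * g x)"
proof (induction k arbitrary: f g)
  case 0 then show ?case by simp
next
  case (Suc k)
  have f: "\<And>x. (f has_real_derivative deriv f x) (at x)" "Ck_real k (deriv f)" "Ck_real k f"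
    using Suc.prems(1) Ck_real_mono by auto
  have g: "\<And>x. (g has_real_derivative deriv g x) (at x)" "Ck_real k (deriv g)" "Ck_real k g"
    using Suc.prems(2) Ck_real_mono by auto
  show ?case
  proof (rule Ck_real_intro[where f'="\<lambda>x. deriv f x * g x + f x * deriv g x"])
    fix x show "((\<lambda>x. f x * g x) has_real_derivative deriv f x * g x + f x * deriv g x) (at x)"
      using DERIV_mult[OF f(1) g(1), of x] by (simp add: algebra_simps)
    show "Ck_real k (\<lambda>x. deriv f x * g x + f x * deriv g x)"
      by (rule Ck_real_add[OF Suc.IH[OF f(2) g(3)] Suc.IH[OF f(3) g(2)]])
  qed
qed

lemma smooth_real_const: "smooth_real (\<lambda>x. c)"
  unfolding smooth_real_def using Ck_real_const by blast

lemma smooth_real_add: "smooth_real f \<Longrightarrow> smooth_real g \<Longrightarrow> smooth_real (\<lambda>x. f x + g x)"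
  unfolding smooth_real_def using Ck_real_add by blast

lemma smooth_real_mult: "smooth_real f \<Longrightarrow> smooth_real g \<Longrightarrow> smooth_real (\<lambda>x. f x * g x)"
  unfolding smooth_real_def using Ck_real_mult by blast

lemma smooth_real_cmult: "smooth_real f \<Longrightarrow> smooth_real (\<lambda>x. c * f x)"
  by (rule smooth_real_mult[OF smooth_real_const])

lemma smooth_real_power: "smooth_real f \<Longrightarrow> smooth_real (\<lambda>x. f x ^ m)"
proof (induction m)
  case 0 then show ?case by (simp add: smooth_real_const)
next
  case (Suc m) then show ?case using smooth_real_mult[of f "\<lambda>x. f x ^ m"] by simp
qed

lemma smooth_real_der: "smooth_real f \<Longrightarrow> (f has_real_derivative deriv f x) (at x)"
  unfolding smooth_real_def using Ck_real.simps(2) by blast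

lemma smooth_real_deriv: "smooth_real f \<Longrightarrow> smooth_real (deriv f)"
  unfolding smooth_real_def using Ck_real.simps(2) by blast

lemma deriv_eqI: "(\<And>x. (f has_real_derivative f' x) (at x)) \<Longrightarrow> deriv f = f'"
  by (auto intro!: DERIV_imp_deriv)

lemma Ck_real_sin_cos: "Ck_real k (\<lambda>x. sin (w * x + d)) \<and> Ck_real k (\<lambda>x. cos (w * x + d))"
proof (induction k arbitrary: d)
  case 0 then show ?case by simp
next
  case (Suc k)
  have d1: "((\<lambda>x. sin (w * x + d)) has_real_derivative w * cos (w * x + d)) (at x)" for x
    by (auto intro!: derivative_eq_intros)
  have d2: "((\<lambda>x. cos (w * x + d)) has_real_derivative (- w) * sin (w * x + d)) (at x)" for x
    by (auto intro!: derivative_eq_intros)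
  show ?case
    by (intro conjI Ck_real_intro[OF d1] Ck_real_intro[OF d2] Ck_real_mult[OF Ck_real_const]
        conjunct1[OF Suc.IH] conjunct2[OF Suc.IH])
qed

lemma smooth_real_sin: "smooth_real (\<lambda>x. sin (w * x + d))"
  unfolding smooth_real_def using Ck_real_sin_cos by blast

lemma smooth_real_exp: "smooth_real (\<lambda>x. exp (w * x))"
  unfolding smooth_real_def
proof
  fix k show "Ck_real k (\<lambda>x. exp (w * x))"
  proof (induction k)
    case 0 then show ?case by simp
  next
    case (Suc k)
    have d: "((\<lambda>x. exp (w * x)) has_real_derivative w * exp (w * x)) (at x)" for x
      by (auto intro!: derivative_eq_intros)
    show ?case by (rule Ck_real_intro[OF d Ck_real_mult[OF Ck_real_const Suc.IH]])
  qed
qed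

abbreviation Dn :: "nat \<Rightarrow> (real \<Rightarrow> real) \<Rightarrow> real \<Rightarrow> real" where "Dn i f \<equiv> (deriv ^^ i) f"

lemma smooth_real_Dn: "smooth_real f \<Longrightarrow> smooth_real (Dn i f)"
  by (induction i) (auto intro: smooth_real_deriv)

lemma Dn_der: "smooth_real f \<Longrightarrow> (Dn i f has_real_derivative Dn (Suc i) f x) (at x)"
  using smooth_real_der[OF smooth_real_Dn[of f i]] by simp

lemma smooth_real_cont: "smooth_real f \<Longrightarrow> continuous_on S f"
  by (intro continuous_at_imp_continuous_on ballI DERIV_isCont[OF smooth_real_der])

lemma Dn_cmult: "smooth_real f \<Longrightarrow> Dn i (\<lambda>x. c * f x) = (\<lambda>x. c * Dn i f x)"
proof (induction i)
  case 0 then show ?case by simp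
next
  case (Suc i)
  have "Dn (Suc i) (\<lambda>x. c * f x) = deriv (\<lambda>x. c * Dn i f x)" using Suc by simp
  also have "\<dots> = (\<lambda>x. c * Dn (Suc i) f x)"
    by (rule deriv_eqI, rule DERIV_cmult, rule Dn_der[OF Suc.prems])
  finally show ?case .
qed

lemma pd_separable:
  assumes "smooth_real Pa" "smooth_real Qa" "smooth_real Pb" "smooth_real Qb"
  shows "pd i j (\<lambda>t r. Pa t * Qa r + Pb t * Qb r) = (\<lambda>t r. Dn i Pa t * Dn j Qa r + Dn i Pb t * Dn j Qb r)"
proof -
  have R: "(pd_r ^^ j) (\<lambda>t r. Pa t * Qa r + Pb t * Qb r) = (\<lambda>t r. Pa t * Dn j Qa r + Pb t * Dn j Qb r)"
  proof (induction j)
    case 0 then show ?case by simp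
  next
    case (Suc j)
    have "(pd_r ^^ Suc j) (\<lambda>t r. Pa t * Qa r + Pb t * Qb r) = pd_r (\<lambda>t r. Pa t * Dn j Qa r + Pb t * Dn j Qb r)"
      using Suc by simp
    also have "\<dots> = (\<lambda>t r. Pa t * Dn (Suc j) Qa r + Pb t * Dn (Suc j) Qb r)"
      unfolding pd_r_def
      by (intro ext DERIV_imp_deriv DERIV_add DERIV_cmult Dn_der assms)
    finally show ?case .
  qed
  have "(pd_t ^^ i) (\<lambda>t r. Pa t * Dn j Qa r + Pb t * Dn j Qb r) = (\<lambda>t r. Dn i Pa t * Dn j Qa r + Dn i Pb t * Dn j Qb r)"
  proof (induction i)
    case 0 then show ?case by simp
  next
    case (Suc i)
    have "(pd_t ^^ Suc i) (\<lambda>t r. Pa t * Dn j Qa r + Pb t * Dn j Qb r) = pd_t (\<lambda>t r. Dn i Pa t * Dn j Qa r + Dn i Pb t * Dn j Qb r)"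
      using Suc by simp
    also have "\<dots> = (\<lambda>t r. Dn (Suc i) Pa t * Dn j Qa r + Dn (Suc i) Pb t * Dn j Qb r)"
      unfolding pd_t_def
      by (intro ext DERIV_imp_deriv DERIV_add DERIV_cmult_right Dn_der assms)
    finally show ?case .
  qed
  then show ?thesis using R by (simp add: pd_def)
qed

lemma smooth_separable:
  assumes "smooth_real Pa" "smooth_real Qa" "smooth_real Pb" "smooth_real Qb"
  shows "smooth_on2 Omega (\<lambda>t r. Pa t * Qa r + Pb t * Qb r)"
  unfolding smooth_on2_def pd_separable[OF assms]
proof (intro allI conjI ballI)
  fix i j
  have c: "continuous_on UNIV (Dn k f)" if "smooth_real f" for k f by (rule smooth_real_cont[OF smooth_real_Dn[OF that]])
  have e: "(\<lambda>(t, r). Dn i Pa t * Dn j Qa r + Dn i Pb t * Dn j Qb r) =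
     (\<lambda>x. Dn i Pa (fst x) * Dn j Qa (snd x) + Dn i Pb (fst x) * Dn j Qb (snd x))" by (auto simp: fun_eq_iff)
  show "continuous_on Omega (\<lambda>(t, r). Dn i Pa t * Dn j Qa r + Dn i Pb t * Dn j Qb r)"
    unfolding e
    by (intro continuous_intros continuous_on_compose2[OF c[OF assms(1)]] continuous_on_compose2[OF c[OF assms(2)]]
        continuous_on_compose2[OF c[OF assms(3)]] continuous_on_compose2[OF c[OF assms(4)]]) auto
  fix x assume "x \<in> Omega"
  obtain t r where x: "x = (t, r)" by (cases x)
  show "case x of (t, r) \<Rightarrow>
      ((\<lambda>s. Dn i Pa s * Dn j Qa r + Dn i Pb s * Dn j Qb r) has_real_derivative Dn (Suc i) Pa t * Dn j Qa r + Dn (Suc i) Pb t * Dn j Qb r) (at t) \<and>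
      ((\<lambda>x. Dn i Pa t * Dn j Qa x + Dn i Pb t * Dn j Qb x) has_real_derivative Dn i Pa t * Dn (Suc j) Qa r + Dn i Pb t * Dn (Suc j) Qb r) (at r)"
    unfolding x prod.case
    by (intro conjI DERIV_add DERIV_cmult DERIV_cmult_right Dn_der assms)
qed

section \<open>Integral calculus on rectangles\<close>

lemma DERIV_continuous_on:
  assumes "\<And>x. x \<in> S \<Longrightarrow> (f has_real_derivative f' x) (at x)"
  shows "continuous_on S f"
  by (intro continuous_at_imp_continuous_on ballI DERIV_isCont[OF assms])

lemma integral_by_parts_vanishing:
  fixes f g f' g' :: "real \<Rightarrow> real"
  assumes ab: "a \<le> b"
    and df: "\<And>x. x \<in> {a..b} \<Longrightarrow> (f has_real_derivative f' x) (at x)"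
    and dg: "\<And>x. x \<in> {a..b} \<Longrightarrow> (g has_real_derivative g' x) (at x)"
    and cf: "continuous_on {a..b} f'" and cg: "continuous_on {a..b} g'"
    and ga: "g a = 0" and gb: "g b = 0"
  shows "integral {a..b} (\<lambda>x. f x * g' x) = - integral {a..b} (\<lambda>x. f' x * g x)"
proof -
  have cf0: "continuous_on {a..b} f" and cg0: "continuous_on {a..b} g"
    using DERIV_continuous_on df dg by blast+
  have int: "(\<lambda>x. f x * g' x) integrable_on {a..b}"
    by (intro integrable_continuous_real continuous_intros cf0 cg)
  have "((\<lambda>x. f' x * g x) has_integral - integral {a..b} (\<lambda>x. f x * g' x)) {a..b}"
  proof (rule integration_by_parts[OF bounded_bilinear_mult ab cf0 cg0])
    show "\<And>x. x \<in> {a..b} \<Longrightarrow> (f has_vector_derivative f' x) (at x)"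
      using df by (simp add: has_real_derivative_iff_has_vector_derivative)
    show "\<And>x. x \<in> {a..b} \<Longrightarrow> (g has_vector_derivative g' x) (at x)"
      using dg by (simp add: has_real_derivative_iff_has_vector_derivative)
    show "((\<lambda>x. f x * g' x) has_integral f b * g b - f a * g a - - integral {a..b} (\<lambda>x. f x * g' x)) {a..b}"
      using int ga gb by (simp add: has_integral_integral)
  qed
  then show ?thesis by (simp add: integral_unique)
qed

lemma integral_by_parts2_vanishing:
  fixes f g f' g' f'' g'' :: "real \<Rightarrow> real"
  assumes ab: "a \<le> b"
    and df: "\<And>x. x \<in> {a..b} \<Longrightarrow> (f has_real_derivative f' x) (at x)"
    and df': "\<And>x. x \<in> {a..b} \<Longrightarrow> (f' has_real_derivative f'' x) (at x)"
    and dg: "\<And>x. x \<in> {a..b} \<Longrightarrow> (g has_real_derivative g' x) (at x)"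
    and dg': "\<And>x. x \<in> {a..b} \<Longrightarrow> (g' has_real_derivative g'' x) (at x)"
    and cf: "continuous_on {a..b} f''" and cg: "continuous_on {a..b} g''"
    and ga: "g a = 0" and gb: "g b = 0" and ga': "g' a = 0" and gb': "g' b = 0"
  shows "integral {a..b} (\<lambda>x. f x * g'' x) = integral {a..b} (\<lambda>x. f'' x * g x)"
proof -
  have cf': "continuous_on {a..b} f'" and cg': "continuous_on {a..b} g'"
    using DERIV_continuous_on df' dg' by blast+
  have "integral {a..b} (\<lambda>x. f x * g'' x) = - integral {a..b} (\<lambda>x. f' x * g' x)"
    by (rule integral_by_parts_vanishing[OF ab df dg' cf' cg ga' gb'])
  also have "integral {a..b} (\<lambda>x. f' x * g' x) = - integral {a..b} (\<lambda>x. f'' x * g x)"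
    by (rule integral_by_parts_vanishing[OF ab df' dg cf cg' ga gb])
  finally show ?thesis by simp
qed

lemma integral_adjoint_second_order:
  fixes f f' f'' g g' h C :: "real \<Rightarrow> real"
  assumes ab: "a \<le> b"
    and df: "\<And>x. x \<in> {a..b} \<Longrightarrow> (f has_real_derivative f' x) (at x)"
    and df': "\<And>x. x \<in> {a..b} \<Longrightarrow> (f' has_real_derivative f'' x) (at x)"
    and dg: "\<And>x. x \<in> {a..b} \<Longrightarrow> (g has_real_derivative g' x) (at x)"
    and cf'': "continuous_on {a..b} f''" and cg': "continuous_on {a..b} g'" and ch: "continuous_on {a..b} h"
    and C: "smooth_real C" and Cab: "C a = 0" "C b = 0" "Dn 1 C a = 0" "Dn 1 C b = 0"
  shows "integral {a..b} (\<lambda>x. f x * Dn 2 C x + g x * Dn 1 C x + h x * C x) =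
    integral {a..b} (\<lambda>x. (f'' x - g' x + h x) * C x)"
proof -
  have dC0: "(C has_real_derivative Dn 1 C x) (at x)" and dC1: "(Dn 1 C has_real_derivative Dn 2 C x) (at x)" for x
    using Dn_der[OF C, of 0 x] Dn_der[OF C, of 1 x] by (simp_all add: numeral_2_eq_2)
  have cC: "continuous_on {a..b} (Dn i C)" for i by (rule smooth_real_cont[OF smooth_real_Dn[OF C]])
  have cC0: "continuous_on {a..b} C" using cC[of 0] by simp
  have cf: "continuous_on {a..b} f" and cg: "continuous_on {a..b} g"
    using DERIV_continuous_on df dg by blast+
  have int: "u integrable_on {a..b}" if "continuous_on {a..b} u" for u :: "real \<Rightarrow> real"
    by (rule integrable_continuous_real[OF that])
  have "integral {a..b} (\<lambda>x. f x * Dn 2 C x + g x * Dn 1 C x + h x * C x) =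
      integral {a..b} (\<lambda>x. f x * Dn 2 C x) + integral {a..b} (\<lambda>x. g x * Dn 1 C x) + integral {a..b} (\<lambda>x. h x * C x)"
    by (subst integral_add, (intro int continuous_intros cf cg ch cC cC0)+,
        subst integral_add, (intro int continuous_intros cf cg ch cC cC0)+, simp)
  also have "integral {a..b} (\<lambda>x. f x * Dn 2 C x) = integral {a..b} (\<lambda>x. f'' x * C x)"
    by (rule integral_by_parts2_vanishing[OF ab df df' dC0 dC1 cf'' cC Cab])
  also have "integral {a..b} (\<lambda>x. g x * Dn 1 C x) = - integral {a..b} (\<lambda>x. g' x * C x)"
    by (rule integral_by_parts_vanishing[OF ab dg dC0 cg' cC Cab(1,2)])
  also have "integral {a..b} (\<lambda>x. f'' x * C x) + - integral {a..b} (\<lambda>x. g' x * C x) + integral {a..b} (\<lambda>x. h x * C x) =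
      integral {a..b} (\<lambda>x. (f'' x - g' x + h x) * C x)"
    unfolding distrib_right left_diff_distrib
    by (subst integral_add, (intro int continuous_intros cf'' cg' ch cC0)+,
        subst integral_diff, (intro int continuous_intros cf'' cg' ch cC0)+, simp)
  finally show ?thesis .
qed

lemma rect_subset_Omega: "r0 > 0 \<Longrightarrow> cbox (t0, r0) (t1, r1) \<subseteq> Omega"
  by (auto simp: cbox_Pair_iff Omega_def)

lemma integral_rect_iterated_r:
  fixes F :: "real \<Rightarrow> real \<Rightarrow> real"
  assumes "continuous_on (cbox (t0, r0) (t1, r1)) (\<lambda>(t, r). F t r)"
  shows "integral (cbox (t0, r0) (t1, r1)) (\<lambda>(t, r). F t r) = integral {t0..t1} (\<lambda>t. integral {r0..r1} (\<lambda>r. F t r))"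
  using integral_prod_continuous[OF assms] by (simp add: cbox_interval)

lemma integral_rect_iterated_t:
  fixes F :: "real \<Rightarrow> real \<Rightarrow> real"
  assumes c: "continuous_on (cbox (t0, r0) (t1, r1)) (\<lambda>(t, r). F t r)"
  shows "integral (cbox (t0, r0) (t1, r1)) (\<lambda>(t, r). F t r) = integral {r0..r1} (\<lambda>r. integral {t0..t1} (\<lambda>t. F t r))"
proof -
  have c': "continuous_on (cbox (r0, t0) (r1, t1)) (\<lambda>(r, t). F t r)"
  proof -
    have "(\<lambda>(r, t). F t r) = (\<lambda>(t, r). F t r) \<circ> prod.swap" by (auto simp: fun_eq_iff)
    moreover have "prod.swap ` cbox (r0, t0) (r1, t1) = cbox (t0, r0) (t1, r1)"
      by (simp add: swap_cbox_Pair)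
    ultimately show ?thesis
      using continuous_on_compose[OF continuous_on_swap, of "cbox (r0, t0) (r1, t1)" "\<lambda>(t, r). F t r"] c
      by metis
  qed
  have "integral (cbox (t0, r0) (t1, r1)) (\<lambda>(t, r). F t r) = integral (cbox (r0, t0) (r1, t1)) (\<lambda>(r, t). F t r)"
    using integral_swap_2dim[of t0 r0 t1 r1 "\<lambda>t r. F t r"] c by simp
  also have "\<dots> = integral {r0..r1} (\<lambda>r. integral {t0..t1} (\<lambda>t. F t r))"
    using integral_prod_continuous[OF c'] by (simp add: cbox_interval)
  finally show ?thesis .
qed

lemma integral_divergence_rect:
  assumes P: "smooth_on2 Omega P" and Q: "smooth_on2 Omega Q"
    and r0: "r0 > 0" and t: "t0 \<le> t1" and r: "r0 \<le> r1"
  shows "integral (cbox (t0, r0) (t1, r1)) (\<lambda>(t, r). pd_t P t r + pd_r Q t r) =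
    integral {r0..r1} (\<lambda>r. P t1 r - P t0 r) + integral {t0..t1} (\<lambda>t. Q t r1 - Q t r0)"
proof -
  let ?R = "cbox (t0, r0) (t1, r1)"
  have cP: "continuous_on ?R (\<lambda>(t, r). pd_t P t r)"
    using continuous_on_subset[OF smooth_cont[OF P, of 1 0] rect_subset_Omega[OF r0]] by (simp add: pd_def)
  have cQ: "continuous_on ?R (\<lambda>(t, r). pd_r Q t r)"
    using continuous_on_subset[OF smooth_cont[OF Q, of 0 1] rect_subset_Omega[OF r0]] by (simp add: pd_def)
  have "integral ?R (\<lambda>(t, r). pd_t P t r + pd_r Q t r) =
      integral ?R (\<lambda>(t, r). pd_t P t r) + integral ?R (\<lambda>(t, r). pd_r Q t r)"
    using integral_add[OF integrable_continuous[OF cP] integrable_continuous[OF cQ]]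
    by (simp add: case_prod_beta')
  also have "integral ?R (\<lambda>(t, r). pd_t P t r) = integral {r0..r1} (\<lambda>r. integral {t0..t1} (\<lambda>t. pd_t P t r))"
    by (rule integral_rect_iterated_t[OF cP])
  also have "\<dots> = integral {r0..r1} (\<lambda>r. P t1 r - P t0 r)"
  proof (rule integral_cong, rule integral_unique, rule fundamental_theorem_of_calculus[OF t])
    fix r x assume "r \<in> {r0..r1}" "x \<in> {t0..t1}"
    then have "r > 0" using r0 by auto
    from smooth_der(1)[OF P this, of 0 0 x]
    show "((\<lambda>t. P t r) has_vector_derivative pd_t P x r) (at x within {t0..t1})"
      by (simp add: has_real_derivative_iff_has_vector_derivative has_vector_derivative_at_within pd_def)
  qed
  also have "integral ?R (\<lambda>(t, r). pd_r Q t r) = integral {t0..t1} (\<lambda>t. integral {r0..r1} (\<lambda>r. pd_r Q t r))"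
    by (rule integral_rect_iterated_r[OF cQ])
  also have "\<dots> = integral {t0..t1} (\<lambda>t. Q t r1 - Q t r0)"
  proof (rule integral_cong, rule integral_unique, rule fundamental_theorem_of_calculus[OF r])
    fix t x assume "x \<in> {r0..r1}"
    then have "x > 0" using r0 by auto
    from smooth_der(2)[OF Q this, of 0 0 t]
    show "((\<lambda>r. Q t r) has_vector_derivative pd_r Q t x) (at x within {r0..r1})"
      by (simp add: has_real_derivative_iff_has_vector_derivative has_vector_derivative_at_within pd_def)
  qed
  finally show ?thesis .
qed

lemma continuous_on_fst_comp: "continuous_on UNIV f \<Longrightarrow> continuous_on S (\<lambda>x::real \<times> real. f (fst x))"
  by (rule continuous_on_compose2[of UNIV f]) (auto intro!: continuous_on_fst continuous_on_id)

lemma continuous_on_rect_snd_comp: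
  "continuous_on {r0..r1} f \<Longrightarrow> continuous_on (cbox (t0, r0) (t1, r1)) (\<lambda>x::real \<times> real. f (snd x))"
  by (rule continuous_on_compose2[of "{r0..r1}" f]) (auto intro!: continuous_on_snd continuous_on_id simp: cbox_Pair_iff)

lemma continuous_on_pd:
  assumes "smooth_on2 Omega f" "S \<subseteq> Omega"
  shows "continuous_on S (\<lambda>x. pd i j f (fst x) (snd x))"
  using continuous_on_subset[OF smooth_cont[OF assms(1)] assms(2)] by (simp add: split_beta)

lemma continuous_on_pd_slice_r:
  assumes "smooth_on2 Omega f" "r0 > 0"
  shows "continuous_on {r0..r1} (\<lambda>r. pd i j f t r)"
proof -
  have "continuous_on {r0..r1} ((\<lambda>(t, r). pd i j f t r) \<circ> (\<lambda>r. (t, r)))"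
    by (rule continuous_on_compose[OF _ continuous_on_subset[OF smooth_cont[OF assms(1)]]])
       (use assms(2) in \<open>auto intro!: continuous_intros\<close>)
  then show ?thesis by (simp add: o_def)
qed

lemma continuous_on_pd_slice_t:
  assumes "smooth_on2 Omega f" "r > 0"
  shows "continuous_on S (\<lambda>t. pd i j f t r)"
proof -
  have "continuous_on S ((\<lambda>(t, r). pd i j f t r) \<circ> (\<lambda>t. (t, r)))"
    by (rule continuous_on_compose[OF _ continuous_on_subset[OF smooth_cont[OF assms(1)]]])
       (use assms(2) in \<open>auto intro!: continuous_intros\<close>)
  then show ?thesis by (simp add: o_def)
qed

lemma integral_rect_t_by_parts:
  assumes sa: "smooth_on2 Omega \<alpha>" and r0: "r0 > 0" and tt: "t0 \<le> t1"
    and A: "smooth_real A" "A t0 = 0" "A t1 = 0" "Dn 1 A t0 = 0" "Dn 1 A t1 = 0"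
    and C: "smooth_real C"
  shows "integral (cbox (t0, r0) (t1, r1)) (\<lambda>(t, r). \<alpha> t r * Dn 2 A t * C r) =
    integral (cbox (t0, r0) (t1, r1)) (\<lambda>(t, r). pd 2 0 \<alpha> t r * A t * C r)"
proof -
  let ?R = "cbox (t0, r0) (t1, r1)"
  have cA: "continuous_on ?R (\<lambda>x. Dn i A (fst x))" for i
    by (rule continuous_on_fst_comp[OF smooth_real_cont[OF smooth_real_Dn[OF A(1)]]])
  have cC: "continuous_on ?R (\<lambda>x. C (snd x))"
    by (rule continuous_on_compose2[OF smooth_real_cont[OF C] continuous_on_snd[OF continuous_on_id]]) auto
  have ca: "continuous_on ?R (\<lambda>x. pd i j \<alpha> (fst x) (snd x))" for i j
    by (rule continuous_on_pd[OF sa rect_subset_Omega[OF r0]])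
  have c0: "continuous_on ?R (\<lambda>x. \<alpha> (fst x) (snd x))" "continuous_on ?R (\<lambda>x. A (fst x))"
    using ca[of 0 0] cA[of 0] by simp_all
  have k1: "continuous_on ?R (\<lambda>(t, r). \<alpha> t r * Dn 2 A t * C r)"
    unfolding case_prod_beta' by (intro continuous_intros cA cC c0)
  have k2: "continuous_on ?R (\<lambda>(t, r). pd 2 0 \<alpha> t r * A t * C r)"
    unfolding case_prod_beta' by (intro continuous_intros ca cC c0)
  have inner: "integral {t0..t1} (\<lambda>t. \<alpha> t r * Dn 2 A t * C r) = integral {t0..t1} (\<lambda>t. pd 2 0 \<alpha> t r * A t * C r)"
    if r: "r \<in> {r0..r1}" for r
  proof -
    have rp: "r > 0" using r r0 by auto
    have "integral {t0..t1} (\<lambda>t. \<alpha> t r * Dn 2 A t) = integral {t0..t1} (\<lambda>t. pd 2 0 \<alpha> t r * A t)"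
    proof (rule integral_by_parts2_vanishing[OF tt])
      show "\<And>x. ((\<lambda>t. \<alpha> t r) has_real_derivative pd 1 0 \<alpha> x r) (at x)"
        using smooth_der(1)[OF sa rp, of 0 0] by simp
      show "\<And>x. ((\<lambda>t. pd 1 0 \<alpha> t r) has_real_derivative pd 2 0 \<alpha> x r) (at x)"
        using smooth_der(1)[OF sa rp, of 1 0] by (simp add: numeral_2_eq_2)
      show "\<And>x. (A has_real_derivative Dn 1 A x) (at x)" using Dn_der[OF A(1), of 0] by simp
      show "\<And>x. (Dn 1 A has_real_derivative Dn 2 A x) (at x)"
        using Dn_der[OF A(1), of 1] by (simp add: numeral_2_eq_2)
      show "continuous_on {t0..t1} (\<lambda>t. pd 2 0 \<alpha> t r)" by (rule continuous_on_pd_slice_t[OF sa rp])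
      show "continuous_on {t0..t1} (Dn 2 A)" by (rule smooth_real_cont[OF smooth_real_Dn[OF A(1)]])
    qed (use A in simp_all)
    then show ?thesis
      using Henstock_Kurzweil_Integration.integral_mult_left[of "{t0..t1}" _ "C r"] by metis
  qed
  show ?thesis
    unfolding integral_rect_iterated_t[OF k1] integral_rect_iterated_t[OF k2]
    by (rule integral_cong) (rule inner)
qed

text \<open>The formal adjoint of \<open>v \<mapsto> a2 v_rr + a1 v_r + a0 v\<close> applied to alpha, given the
  derivatives \<open>a2'\<close>, \<open>a2''\<close>, \<open>a1'\<close> of the coefficients:
  \<open>(a2 alpha)_rr - (a1 alpha)_r + a0 alpha\<close>.\<close>

definition radial_adjoint ::
  "(real \<Rightarrow> real \<Rightarrow> real) \<Rightarrow> (real \<Rightarrow> real) \<Rightarrow> (real \<Rightarrow> real) \<Rightarrow> (real \<Rightarrow> real) \<Rightarrow>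
    (real \<Rightarrow> real) \<Rightarrow> (real \<Rightarrow> real) \<Rightarrow> (real \<Rightarrow> real) \<Rightarrow> real \<Rightarrow> real \<Rightarrow> real" where
  "radial_adjoint \<alpha> a2 a2' a2'' a1 a1' a0 t r =
     (pd 0 2 \<alpha> t r * a2 r + 2 * (pd 0 1 \<alpha> t r * a2' r) + \<alpha> t r * a2'' r)
     - (pd 0 1 \<alpha> t r * a1 r + \<alpha> t r * a1' r) + \<alpha> t r * a0 r"

lemma continuous_on_radial_adjoint:
  assumes sa: "smooth_on2 Omega \<alpha>" and r0: "r0 > 0"
    and c: "continuous_on {r0..r1} a2" "continuous_on {r0..r1} a2'" "continuous_on {r0..r1} a2''"
      "continuous_on {r0..r1} a1" "continuous_on {r0..r1} a1'" "continuous_on {r0..r1} a0"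
  shows "continuous_on (cbox (t0, r0) (t1, r1)) (\<lambda>x. radial_adjoint \<alpha> a2 a2' a2'' a1 a1' a0 (fst x) (snd x))"
proof -
  have ca: "continuous_on (cbox (t0, r0) (t1, r1)) (\<lambda>x. pd i j \<alpha> (fst x) (snd x))" for i j
    by (rule continuous_on_pd[OF sa rect_subset_Omega[OF r0]])
  have ca0: "continuous_on (cbox (t0, r0) (t1, r1)) (\<lambda>x. \<alpha> (fst x) (snd x))" using ca[of 0 0] by simp
  show ?thesis unfolding radial_adjoint_def
    by (intro continuous_intros ca ca0 continuous_on_rect_snd_comp[OF c(1)] continuous_on_rect_snd_comp[OF c(2)]
        continuous_on_rect_snd_comp[OF c(3)] continuous_on_rect_snd_comp[OF c(4)]
        continuous_on_rect_snd_comp[OF c(5)] continuous_on_rect_snd_comp[OF c(6)])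
qed

lemma integral_slice_r_adjoint:
  assumes sa: "smooth_on2 Omega \<alpha>" and r0: "r0 > 0" and rr: "r0 \<le> r1"
    and da2: "\<And>x. x \<in> {r0..r1} \<Longrightarrow> (a2 has_real_derivative a2' x) (at x)"
    and da2': "\<And>x. x \<in> {r0..r1} \<Longrightarrow> (a2' has_real_derivative a2'' x) (at x)"
    and da1: "\<And>x. x \<in> {r0..r1} \<Longrightarrow> (a1 has_real_derivative a1' x) (at x)"
    and ca: "continuous_on {r0..r1} a2''" "continuous_on {r0..r1} a1'" "continuous_on {r0..r1} a0"
    and C: "smooth_real C" "C r0 = 0" "C r1 = 0" "Dn 1 C r0 = 0" "Dn 1 C r1 = 0"
  shows "integral {r0..r1} (\<lambda>r. \<alpha> t r * (a2 r * Dn 2 C r + a1 r * Dn 1 C r + a0 r * C r)) =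
    integral {r0..r1} (\<lambda>r. radial_adjoint \<alpha> a2 a2' a2'' a1 a1' a0 t r * C r)"
proof -
  have ca0: "continuous_on {r0..r1} a2" "continuous_on {r0..r1} a2'" "continuous_on {r0..r1} a1"
    using DERIV_continuous_on da2 da2' da1 by blast+
  have dal0: "((\<lambda>x. \<alpha> t x) has_real_derivative pd 0 1 \<alpha> t x) (at x)"
    and dal1: "((\<lambda>x. pd 0 1 \<alpha> t x) has_real_derivative pd 0 2 \<alpha> t x) (at x)"
    if "x \<in> {r0..r1}" for x
    using smooth_der(2)[OF sa, of x 0 0 t] smooth_der(2)[OF sa, of x 0 1 t] that r0
    by (simp_all add: numeral_2_eq_2)
  have cal: "continuous_on {r0..r1} (\<lambda>x. pd i j \<alpha> t x)" for i j
    by (rule continuous_on_pd_slice_r[OF sa r0])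
  have cal0: "continuous_on {r0..r1} (\<lambda>x. \<alpha> t x)" using cal[of 0 0] by simp
  have "integral {r0..r1} (\<lambda>x. (\<alpha> t x * a2 x) * Dn 2 C x + (\<alpha> t x * a1 x) * Dn 1 C x + (\<alpha> t x * a0 x) * C x) =
      integral {r0..r1} (\<lambda>x. ((pd 0 2 \<alpha> t x * a2 x + 2 * (pd 0 1 \<alpha> t x * a2' x) + \<alpha> t x * a2'' x)
        - (pd 0 1 \<alpha> t x * a1 x + \<alpha> t x * a1' x) + \<alpha> t x * a0 x) * C x)"
  proof (rule integral_adjoint_second_order[OF rr _ _ _ _ _ _ C])
    fix x assume x: "x \<in> {r0..r1}"
    show "((\<lambda>x. \<alpha> t x * a2 x) has_real_derivative pd 0 1 \<alpha> t x * a2 x + \<alpha> t x * a2' x) (at x)"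
      using DERIV_mult[OF dal0[OF x] da2[OF x]] by (simp add: mult.commute)
    show "((\<lambda>x. pd 0 1 \<alpha> t x * a2 x + \<alpha> t x * a2' x) has_real_derivative
        pd 0 2 \<alpha> t x * a2 x + 2 * (pd 0 1 \<alpha> t x * a2' x) + \<alpha> t x * a2'' x) (at x)"
      by (rule DERIV_cong[OF DERIV_add[OF DERIV_mult[OF dal1[OF x] da2[OF x]]
            DERIV_mult[OF dal0[OF x] da2'[OF x]]]]) (simp add: numeral_2_eq_2 algebra_simps)
    show "((\<lambda>x. \<alpha> t x * a1 x) has_real_derivative pd 0 1 \<alpha> t x * a1 x + \<alpha> t x * a1' x) (at x)"
      using DERIV_mult[OF dal0[OF x] da1[OF x]] by (simp add: mult.commute)
  next
    show "continuous_on {r0..r1} (\<lambda>x. pd 0 2 \<alpha> t x * a2 x + 2 * (pd 0 1 \<alpha> t x * a2' x) + \<alpha> t x * a2'' x)"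
      "continuous_on {r0..r1} (\<lambda>x. pd 0 1 \<alpha> t x * a1 x + \<alpha> t x * a1' x)"
      "continuous_on {r0..r1} (\<lambda>x. \<alpha> t x * a0 x)"
      by (intro continuous_intros cal cal0 ca0 ca)+
  qed
  then show ?thesis by (simp add: radial_adjoint_def algebra_simps)
qed

lemma integral_rect_r_adjoint:
  assumes sa: "smooth_on2 Omega \<alpha>" and r0: "r0 > 0" and rr: "r0 \<le> r1"
    and da2: "\<And>x. x \<in> {r0..r1} \<Longrightarrow> (a2 has_real_derivative a2' x) (at x)"
    and da2': "\<And>x. x \<in> {r0..r1} \<Longrightarrow> (a2' has_real_derivative a2'' x) (at x)"
    and da1: "\<And>x. x \<in> {r0..r1} \<Longrightarrow> (a1 has_real_derivative a1' x) (at x)"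
    and ca: "continuous_on {r0..r1} a2''" "continuous_on {r0..r1} a1'" "continuous_on {r0..r1} a0"
    and A: "smooth_real A"
    and C: "smooth_real C" "C r0 = 0" "C r1 = 0" "Dn 1 C r0 = 0" "Dn 1 C r1 = 0"
  shows "integral (cbox (t0, r0) (t1, r1))
      (\<lambda>(t, r). A t * (\<alpha> t r * (a2 r * Dn 2 C r + a1 r * Dn 1 C r + a0 r * C r))) =
    integral (cbox (t0, r0) (t1, r1))
      (\<lambda>(t, r). A t * (radial_adjoint \<alpha> a2 a2' a2'' a1 a1' a0 t r * C r))"
proof -
  let ?R = "cbox (t0, r0) (t1, r1)"
  have ca0: "continuous_on {r0..r1} a2" "continuous_on {r0..r1} a2'" "continuous_on {r0..r1} a1"
    using DERIV_continuous_on da2 da2' da1 by blast+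
  have cA: "continuous_on ?R (\<lambda>x. A (fst x))"
    by (rule continuous_on_fst_comp[OF smooth_real_cont[OF A]])
  have cC: "continuous_on ?R (\<lambda>x. Dn i C (snd x))" for i
    by (rule continuous_on_rect_snd_comp[OF smooth_real_cont[OF smooth_real_Dn[OF C(1)]]])
  have cpd: "continuous_on ?R (\<lambda>x. pd i j \<alpha> (fst x) (snd x))" for i j
    by (rule continuous_on_pd[OF sa rect_subset_Omega[OF r0]])
  have c0: "continuous_on ?R (\<lambda>x. \<alpha> (fst x) (snd x))" "continuous_on ?R (\<lambda>x. C (snd x))"
    using cpd[of 0 0] cC[of 0] by simp_all
  have k1: "continuous_on ?R (\<lambda>(t, r). A t * (\<alpha> t r * (a2 r * Dn 2 C r + a1 r * Dn 1 C r + a0 r * C r)))"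
    unfolding case_prod_beta'
    by (intro continuous_intros cA cC c0 continuous_on_rect_snd_comp[OF ca0(1)]
        continuous_on_rect_snd_comp[OF ca0(3)] continuous_on_rect_snd_comp[OF ca(3)])
  have k2: "continuous_on ?R (\<lambda>(t, r). A t * (radial_adjoint \<alpha> a2 a2' a2'' a1 a1' a0 t r * C r))"
    unfolding case_prod_beta'
    by (intro continuous_intros cA c0 continuous_on_radial_adjoint[OF sa r0 ca0(1,2) ca(1) ca0(3) ca(2,3)])
  note inner = integral_slice_r_adjoint[OF sa r0 rr da2 da2' da1 ca C]
  show ?thesis
    unfolding integral_rect_iterated_r[OF k1] integral_rect_iterated_r[OF k2]
    by (rule integral_cong) (use inner in \<open>simp add: Henstock_Kurzweil_Integration.integral_mult_right\<close>)
qed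

lemma integral_adjoint_rect:
  assumes sa: "smooth_on2 Omega \<alpha>" and r0: "r0 > 0" and tt: "t0 \<le> t1" and rr: "r0 \<le> r1"
    and da2: "\<And>x. x \<in> {r0..r1} \<Longrightarrow> (a2 has_real_derivative a2' x) (at x)"
    and da2': "\<And>x. x \<in> {r0..r1} \<Longrightarrow> (a2' has_real_derivative a2'' x) (at x)"
    and da1: "\<And>x. x \<in> {r0..r1} \<Longrightarrow> (a1 has_real_derivative a1' x) (at x)"
    and ca: "continuous_on {r0..r1} a2''" "continuous_on {r0..r1} a1'" "continuous_on {r0..r1} a0"
    and A: "smooth_real A" "A t0 = 0" "A t1 = 0" "Dn 1 A t0 = 0" "Dn 1 A t1 = 0"
    and C: "smooth_real C" "C r0 = 0" "C r1 = 0" "Dn 1 C r0 = 0" "Dn 1 C r1 = 0"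
  shows "integral (cbox (t0, r0) (t1, r1))
      (\<lambda>(t, r). \<alpha> t r * (Dn 2 A t * C r - A t * (a2 r * Dn 2 C r + a1 r * Dn 1 C r + a0 r * C r))) =
    integral (cbox (t0, r0) (t1, r1))
      (\<lambda>(t, r). (pd 2 0 \<alpha> t r - radial_adjoint \<alpha> a2 a2' a2'' a1 a1' a0 t r) * (A t * C r))"
proof -
  let ?R = "cbox (t0, r0) (t1, r1)"
  let ?adj = "radial_adjoint \<alpha> a2 a2' a2'' a1 a1' a0"
  have ca0: "continuous_on {r0..r1} a2" "continuous_on {r0..r1} a2'" "continuous_on {r0..r1} a1"
    using DERIV_continuous_on da2 da2' da1 by blast+
  have cA: "continuous_on ?R (\<lambda>x. Dn i A (fst x))" for i
    by (rule continuous_on_fst_comp[OF smooth_real_cont[OF smooth_real_Dn[OF A(1)]]])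
  have cC: "continuous_on ?R (\<lambda>x. Dn i C (snd x))" for i
    by (rule continuous_on_rect_snd_comp[OF smooth_real_cont[OF smooth_real_Dn[OF C(1)]]])
  have cpd: "continuous_on ?R (\<lambda>x. pd i j \<alpha> (fst x) (snd x))" for i j
    by (rule continuous_on_pd[OF sa rect_subset_Omega[OF r0]])
  have cadj: "continuous_on ?R (\<lambda>x. ?adj (fst x) (snd x))"
    by (rule continuous_on_radial_adjoint[OF sa r0 ca0(1,2) ca(1) ca0(3) ca(2,3)])
  have int: "f integrable_on ?R" if "continuous_on ?R f" for f :: "real \<times> real \<Rightarrow> real"
    by (rule integrable_continuous[OF that])
  have c0: "continuous_on ?R (\<lambda>x. \<alpha> (fst x) (snd x))" "continuous_on ?R (\<lambda>x. A (fst x))"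
    "continuous_on ?R (\<lambda>x. C (snd x))"
    using cpd[of 0 0] cA[of 0] cC[of 0] by simp_all
  have cco: "continuous_on ?R (\<lambda>x. a2 (snd x))" "continuous_on ?R (\<lambda>x. a1 (snd x))"
    "continuous_on ?R (\<lambda>x. a0 (snd x))"
    by (intro continuous_on_rect_snd_comp ca0 ca)+
  have "integral ?R (\<lambda>(t, r). \<alpha> t r * (Dn 2 A t * C r - A t * (a2 r * Dn 2 C r + a1 r * Dn 1 C r + a0 r * C r))) =
      integral ?R (\<lambda>(t, r). \<alpha> t r * Dn 2 A t * C r)
      - integral ?R (\<lambda>(t, r). A t * (\<alpha> t r * (a2 r * Dn 2 C r + a1 r * Dn 1 C r + a0 r * C r)))"
    unfolding case_prod_beta'
    by (subst integral_diff[symmetric], (intro int continuous_intros cA cC c0 cco)+)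
       (simp add: algebra_simps)
  also have "\<dots> = integral ?R (\<lambda>(t, r). pd 2 0 \<alpha> t r * A t * C r) - integral ?R (\<lambda>(t, r). A t * (?adj t r * C r))"
    by (simp only: integral_rect_t_by_parts[OF sa r0 tt A C(1)]
        integral_rect_r_adjoint[OF sa r0 rr da2 da2' da1 ca A(1) C])
  also have "\<dots> = integral ?R (\<lambda>(t, r). (pd 2 0 \<alpha> t r - ?adj t r) * (A t * C r))"
    unfolding case_prod_beta'
    by (subst integral_diff[symmetric], (intro int continuous_intros c0 cpd cadj)+)
       (simp add: algebra_simps)
  finally show ?thesis .
qed

section \<open>The test family\<close>

lemma Dn_power_factor:
  assumes S: "smooth_real S" and h: "smooth_real h" and j: "j \<le> K"
  shows "\<exists>hj. smooth_real hj \<and> Dn j (\<lambda>x. S x ^ K * h x) = (\<lambda>x. S x ^ (K - j) * hj x)"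
  using j
proof (induction j)
  case 0 then show ?case using h by auto
next
  case (Suc j)
  then obtain hj where hj: "smooth_real hj" "Dn j (\<lambda>x. S x ^ K * h x) = (\<lambda>x. S x ^ (K - j) * hj x)" by auto
  define m where "m = K - Suc j"
  have m: "K - j = Suc m" "K - Suc j = m" using Suc.prems unfolding m_def by arith+
  define hn where "hn = (\<lambda>x. of_nat (Suc m) * deriv S x * hj x + S x * deriv hj x)"
  have d: "((\<lambda>x. S x ^ Suc m * hj x) has_real_derivative S x ^ m * hn x) (at x)" for x
    by (rule DERIV_cong[OF DERIV_mult[OF DERIV_power[OF smooth_real_der[OF S]] smooth_real_der[OF hj(1)]]])
       (simp add: hn_def algebra_simps)
  have "Dn (Suc j) (\<lambda>x. S x ^ K * h x) = deriv (\<lambda>x. S x ^ Suc m * hj x)" using hj m by simp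
  also have "\<dots> = (\<lambda>x. S x ^ m * hn x)" by (rule deriv_eqI[OF d])
  finally have "Dn (Suc j) (\<lambda>x. S x ^ K * h x) = (\<lambda>x. S x ^ (K - Suc j) * hn x)" using m by simp
  moreover have "smooth_real hn" unfolding hn_def
    by (intro smooth_real_add smooth_real_mult smooth_real_const smooth_real_deriv S hj(1))
  ultimately show ?case by blast
qed

lemma Dn_power_vanish:
  assumes "smooth_real S" "smooth_real h" "S x0 = 0" "j < K"
  shows "Dn j (\<lambda>x. S x ^ K * h x) x0 = 0"
proof -
  obtain hj where "Dn j (\<lambda>x. S x ^ K * h x) = (\<lambda>x. S x ^ (K - j) * hj x)"
    using Dn_power_factor[OF assms(1,2), of j K] assms(4) by auto
  then show ?thesis using assms(3,4) by simp
qed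

definition bump :: "real \<Rightarrow> real \<Rightarrow> nat \<Rightarrow> real \<Rightarrow> real" where
  "bump w x0 K x = sin (w * (x - x0)) ^ K"

definition bump_exp :: "real \<Rightarrow> real \<Rightarrow> nat \<Rightarrow> real \<Rightarrow> real \<Rightarrow> real" where
  "bump_exp w x0 K k x = bump w x0 K x * exp (k * x)"

lemma bump_as_power: "bump w x0 K = (\<lambda>x. sin (w * x + - (w * x0)) ^ K * 1)"
  by (simp add: fun_eq_iff bump_def algebra_simps)

lemma bump_exp_as_power: "bump_exp w x0 K k = (\<lambda>x. sin (w * x + - (w * x0)) ^ K * exp (k * x))"
  by (simp add: fun_eq_iff bump_exp_def bump_def algebra_simps)

lemma smooth_real_bump: "smooth_real (bump w x0 K)"
  unfolding bump_as_power by (intro smooth_real_mult smooth_real_power smooth_real_sin smooth_real_const)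

lemma smooth_real_bump_exp: "smooth_real (bump_exp w x0 K k)"
  unfolding bump_exp_as_power by (intro smooth_real_mult smooth_real_power smooth_real_sin smooth_real_exp)

lemma bump_vanish:
  assumes "w > 0" "j < K" "x = x0 \<or> x = x0 + pi / w"
  shows "Dn j (bump w x0 K) x = 0"
  unfolding bump_as_power
  by (rule Dn_power_vanish[OF smooth_real_sin smooth_real_const _ assms(2)]) (use assms in \<open>auto simp: algebra_simps\<close>)

lemma bump_exp_vanish:
  assumes "w > 0" "j < K" "x = x0 \<or> x = x0 + pi / w"
  shows "Dn j (bump_exp w x0 K k) x = 0"
  unfolding bump_exp_as_power
  by (rule Dn_power_vanish[OF smooth_real_sin smooth_real_exp _ assms(2)]) (use assms in \<open>auto simp: algebra_simps\<close>)

lemma bump_bound: "\<bar>bump w x0 K x\<bar> \<le> 1"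
  unfolding bump_def power_abs by (rule power_le_one) (simp_all add: abs_sin_le_one)

lemma bump_exp_bound: "\<bar>bump_exp w x0 K k x\<bar> \<le> exp (k * x)"
  using bump_bound[of w x0 K x] unfolding bump_exp_def by (simp add: abs_mult mult_left_le_one_le)

lemma bump_nonneg:
  assumes "w > 0" "x0 \<le> x" "x \<le> x0 + pi / w"
  shows "bump w x0 K x \<ge> 0"
proof -
  have "w * (x - x0) \<le> w * (pi / w)" using assms by (intro mult_left_mono) auto
  then have "sin (w * (x - x0)) \<ge> 0" using assms by (intro sin_ge_zero) auto
  then show ?thesis unfolding bump_def by simp
qed

lemma bump_exp_nonneg:
  assumes "w > 0" "x0 \<le> x" "x \<le> x0 + pi / w"
  shows "bump_exp w x0 K k x \<ge> 0"
  using bump_nonneg[OF assms] unfolding bump_exp_def by simp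

lemma bump_centre:
  assumes "w > 0"
  shows "bump w x0 K (x0 + pi / (2 * w)) = 1"
  using assms by (simp add: bump_def)

definition test_fam :: "real \<Rightarrow> real \<Rightarrow> (real \<Rightarrow> real) \<Rightarrow> (real \<Rightarrow> real) \<Rightarrow> real \<Rightarrow> real \<Rightarrow> real \<Rightarrow> real" where
  "test_fam lam k A C e = (\<lambda>t r. lam * exp (k * r) + e * A t * C r)"

lemma test_fam_separable: "test_fam lam k A C e = (\<lambda>t r. 1 * (lam * exp (k * r)) + (e * A t) * C r)"
  by (simp add: fun_eq_iff test_fam_def)

lemma pd_test_fam:
  assumes "smooth_real A" "smooth_real C"
  shows "pd i j (test_fam lam k A C e) =
    (\<lambda>t r. Dn i (\<lambda>_. 1) t * Dn j (\<lambda>r. lam * exp (k * r)) r + e * Dn i A t * Dn j C r)"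
proof -
  have s: "smooth_real (\<lambda>r. lam * exp (k * r))" by (intro smooth_real_cmult smooth_real_exp)
  have s2: "smooth_real (\<lambda>t. e * A t)" by (intro smooth_real_cmult assms(1))
  show ?thesis unfolding test_fam_separable
    using pd_separable[OF smooth_real_const[of 1] s s2 assms(2), of i j] Dn_cmult[OF assms(1), of i e]
    by (simp add: mult.assoc)
qed

lemma test_fam_pos:
  assumes "\<bar>e\<bar> < lam" "\<bar>A t\<bar> \<le> 1" "\<bar>C r\<bar> \<le> exp (k * r)"
  shows "test_fam lam k A C e t r > 0"
proof -
  have "\<bar>A t\<bar> * \<bar>C r\<bar> \<le> 1 * exp (k * r)"
    by (rule mult_mono[OF assms(2,3)]) auto
  then have "\<bar>e * A t * C r\<bar> \<le> \<bar>e\<bar> * exp (k * r)"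
    by (simp add: abs_mult mult.assoc mult_left_mono)
  also have "\<dots> < lam * exp (k * r)" using assms(1) by simp
  finally show ?thesis unfolding test_fam_def by simp
qed

lemma admissible_test_fam:
  assumes "smooth_real A" "smooth_real C" "\<bar>e\<bar> < lam"
    and "\<And>t. \<bar>A t\<bar> \<le> 1" "\<And>r. \<bar>C r\<bar> \<le> exp (k * r)"
  shows "admissible (test_fam lam k A C e)"
  unfolding admissible_def
proof
  show "smooth_on2 Omega (test_fam lam k A C e)"
    unfolding test_fam_separable
    by (intro smooth_separable smooth_real_const smooth_real_cmult smooth_real_exp assms(1,2))
  show "\<forall>(t, r)\<in>Omega. 0 < test_fam lam k A C e t r" using test_fam_pos assms(3-5) by auto
qed

lemma jet_test_fam_eq:
  assumes "smooth_real A" "smooth_real C" "Dn i A t * Dn j C r = 0"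
  shows "jet (test_fam lam k A C e) t r i j = jet (test_fam lam k A C 0) t r i j"
  unfolding jet_def pd_test_fam[OF assms(1,2)] using assms(3) by (simp add: mult.assoc)

text \<open>\<open>E_line\<close> is E evaluated along a line \<open>U0 + e G\<close> in function space, written in terms
  of the values of the relevant derivatives of the base point and of the direction; the base
  point is taken to be time independent.  \<open>E_line_deriv\<close> is its derivative in e.\<close>

definition E_line :: "real \<Rightarrow> real \<Rightarrow> real \<Rightarrow> real \<Rightarrow> real \<Rightarrow> real \<Rightarrow> real \<Rightarrow> real \<Rightarrow> real \<Rightarrow> real \<Rightarrow> real \<Rightarrow> real \<Rightarrow> real" where
  "E_line a b c p U0 G A2C L0 L1 D0 D1 e =
     e * A2C - (c + b * (U0 + e * G) powr p) * (L0 + e * L1) - a * (U0 + e * G) powr (p - 1) * (D0 + e * D1)\<^sup>2"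

definition E_line_deriv :: "real \<Rightarrow> real \<Rightarrow> real \<Rightarrow> real \<Rightarrow> real \<Rightarrow> real \<Rightarrow> real \<Rightarrow> real \<Rightarrow> real \<Rightarrow> real \<Rightarrow> real \<Rightarrow> real \<Rightarrow> real" where
  "E_line_deriv a b c p U0 G A2C L0 L1 D0 D1 e =
     A2C - (b * (p * (U0 + e * G) powr (p - 1) * G)) * (L0 + e * L1) - (c + b * (U0 + e * G) powr p) * L1
     - a * ((p - 1) * (U0 + e * G) powr (p - 1 - 1) * G) * (D0 + e * D1)\<^sup>2
     - a * (U0 + e * G) powr (p - 1) * (2 * (D0 + e * D1) * D1)"

lemma E_line_has_deriv:
  assumes pos: "U0 + e * G > 0"
  shows "((\<lambda>e. E_line a b c p U0 G A2C L0 L1 D0 D1 e) has_real_derivative E_line_deriv a b c p U0 G A2C L0 L1 D0 D1 e) (at e)"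
proof -
  have dU: "((\<lambda>e. U0 + e * G) has_real_derivative G) (at e)"
    by (auto intro!: derivative_eq_intros)
  have dUp: "((\<lambda>e. (U0 + e * G) powr p) has_real_derivative p * (U0 + e * G) powr (p - 1) * G) (at e)"
    using DERIV_fun_powr[OF dU pos, of p] by simp
  have dUp1: "((\<lambda>e. (U0 + e * G) powr (p - 1)) has_real_derivative (p - 1) * (U0 + e * G) powr (p - 1 - 1) * G) (at e)"
    using DERIV_fun_powr[OF dU pos, of "p - 1"] by simp
  have dL: "((\<lambda>e. L0 + e * L1) has_real_derivative L1) (at e)"
    by (auto intro!: derivative_eq_intros)
  have dD: "((\<lambda>e. (D0 + e * D1)\<^sup>2) has_real_derivative 2 * (D0 + e * D1) * D1) (at e)"
    by (auto intro!: derivative_eq_intros)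
  show ?thesis unfolding E_line_def E_line_deriv_def
    by (rule DERIV_cong[OF DERIV_diff[OF DERIV_diff[OF DERIV_cmult_right[OF DERIV_ident]
          DERIV_mult[OF DERIV_add[OF DERIV_const DERIV_cmult[OF dUp]] dL]] DERIV_mult[OF DERIV_cmult[OF dUp1] dD]]])
       (simp add: algebra_simps)
qed

lemma continuous_E_line:
  fixes U0f Gf A2Cf L0f L1f D0f D1f ef :: "'x::topological_space \<Rightarrow> real"
  assumes "continuous_on S U0f" "continuous_on S Gf" "continuous_on S A2Cf" "continuous_on S L0f"
    "continuous_on S L1f" "continuous_on S D0f" "continuous_on S D1f" "continuous_on S ef"
    and pos: "\<And>x. x \<in> S \<Longrightarrow> U0f x + ef x * Gf x > 0"
  shows "continuous_on S (\<lambda>x. E_line a b c p (U0f x) (Gf x) (A2Cf x) (L0f x) (L1f x) (D0f x) (D1f x) (ef x))"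
    "continuous_on S (\<lambda>x. E_line_deriv a b c p (U0f x) (Gf x) (A2Cf x) (L0f x) (L1f x) (D0f x) (D1f x) (ef x))"
  unfolding E_line_def E_line_deriv_def
  by (intro continuous_intros assms; use pos in \<open>force\<close>)+

definition E_test :: "real \<Rightarrow> real \<Rightarrow> real \<Rightarrow> real \<Rightarrow> real \<Rightarrow> real \<Rightarrow> real \<Rightarrow> (real \<Rightarrow> real) \<Rightarrow> (real \<Rightarrow> real) \<Rightarrow> real \<Rightarrow> real \<Rightarrow> real \<Rightarrow> real" where
  "E_test a b c p n lam k A C e t r = E_line a b c p (lam * exp (k * r)) (A t * C r) (Dn 2 A t * C r)
      (lam * (k * (k * exp (k * r))) + (n - 1) / r * (lam * (k * exp (k * r))))
      (A t * Dn 2 C r + (n - 1) / r * (A t * Dn 1 C r))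
      (lam * (k * exp (k * r))) (A t * Dn 1 C r) e"

definition lin_test :: "real \<Rightarrow> real \<Rightarrow> real \<Rightarrow> real \<Rightarrow> real \<Rightarrow> real \<Rightarrow> real \<Rightarrow> (real \<Rightarrow> real) \<Rightarrow> (real \<Rightarrow> real) \<Rightarrow> real \<Rightarrow> real \<Rightarrow> real \<Rightarrow> real" where
  "lin_test a b c p n lam k A C e t r = E_line_deriv a b c p (lam * exp (k * r)) (A t * C r) (Dn 2 A t * C r)
      (lam * (k * (k * exp (k * r))) + (n - 1) / r * (lam * (k * exp (k * r))))
      (A t * Dn 2 C r + (n - 1) / r * (A t * Dn 1 C r))
      (lam * (k * exp (k * r))) (A t * Dn 1 C r) e"

lemma Eop_test_fam:
  assumes "smooth_real A" "smooth_real C"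
  shows "Eop n a b c p (test_fam lam k A C e) t r = E_test a b c p n lam k A C e t r"
proof -
  have "Dn (Suc i) (\<lambda>_::real. 1::real) = (\<lambda>_. 0)" for i
  proof (induction i)
    case (Suc i)
    have "deriv (Dn (Suc i) (\<lambda>_::real. 1::real)) = (\<lambda>_. 0)" unfolding Suc.IH by simp
    then show ?case by simp
  qed (simp add: fun_eq_iff)
  from this[of 0] this[of 1]
  have d: "Dn 1 (\<lambda>_::real. 1::real) = (\<lambda>_. 0)" "Dn 2 (\<lambda>_::real. 1::real) = (\<lambda>_. 0)"
    by (simp_all add: numeral_2_eq_2)
  have e1: "Dn 1 (\<lambda>r. lam * exp (k * r)) = (\<lambda>r. lam * (k * exp (k * r)))"
    by (simp, rule deriv_eqI) (auto intro!: derivative_eq_intros)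
  have e2: "Dn 2 (\<lambda>r. lam * exp (k * r)) = (\<lambda>r. lam * (k * (k * exp (k * r))))"
  proof -
    have "Dn 2 (\<lambda>r. lam * exp (k * r)) = deriv (Dn 1 (\<lambda>r. lam * exp (k * r)))" by (simp add: numeral_2_eq_2)
    also have "\<dots> = (\<lambda>r. lam * (k * (k * exp (k * r))))" unfolding e1
      by (rule deriv_eqI) (auto intro!: derivative_eq_intros)
    finally show ?thesis .
  qed
  have u: "test_fam lam k A C e t r = lam * exp (k * r) + e * (A t * C r)" by (simp add: test_fam_def)
  show ?thesis
    unfolding Eop_def E_test_def E_line_def pd_test_fam[OF assms] d e1 e2 u
    by (simp add: algebra_simps)
qed

section \<open>A kinematic conservation law forces a = p b\<close>

lemma integral_conservation_law:
  assumes T: "smooth_on2 Omega T" and X: "smooth_on2 Omega X"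
    and law: "\<forall>(t, r)\<in>Omega. \<alpha> t r * Eop n a b c p u t r = pd_t T t r + pd_r X t r"
    and r0: "r0 > 0" and tt: "t0 \<le> t1" and rr: "r0 \<le> r1"
  shows "integral (cbox (t0, r0) (t1, r1)) (\<lambda>(t, r). \<alpha> t r * Eop n a b c p u t r) =
    integral {r0..r1} (\<lambda>r. T t1 r - T t0 r) + integral {t0..t1} (\<lambda>t. X t r1 - X t r0)"
proof -
  have "integral (cbox (t0, r0) (t1, r1)) (\<lambda>(t, r). \<alpha> t r * Eop n a b c p u t r) =
      integral (cbox (t0, r0) (t1, r1)) (\<lambda>(t, r). pd_t T t r + pd_r X t r)"
  proof (rule integral_cong)
    fix x assume "x \<in> cbox (t0, r0) (t1, r1)"
    then have "x \<in> Omega" using rect_subset_Omega[OF r0] by blast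
    then show "(case x of (t, r) \<Rightarrow> \<alpha> t r * Eop n a b c p u t r) = (case x of (t, r) \<Rightarrow> pd_t T t r + pd_r X t r)"
      using law by auto
  qed
  also have "\<dots> = integral {r0..r1} (\<lambda>r. T t1 r - T t0 r) + integral {t0..t1} (\<lambda>t. X t r1 - X t r0)"
    by (rule integral_divergence_rect[OF T X r0 tt rr])
  finally show ?thesis .
qed

text \<open>The boundary terms only involve jets of order less than K on the boundary of the
  square, where the perturbation vanishes to order K.\<close>

lemma integral_E_test_const:
  fixes T X :: "real \<Rightarrow> real \<Rightarrow> (nat \<Rightarrow> nat \<Rightarrow> real) \<Rightarrow> real"
  assumes lT: "\<And>t r J J'. (\<And>i j. i + j \<le> kT \<Longrightarrow> J i j = J' i j) \<Longrightarrow> T t r J = T t r J'"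
    and lX: "\<And>t r J J'. (\<And>i j. i + j \<le> kX \<Longrightarrow> J i j = J' i j) \<Longrightarrow> X t r J = X t r J'"
    and law: "\<forall>u. admissible u \<longrightarrow> smooth_on2 Omega (eval_df T u) \<and> smooth_on2 Omega (eval_df X u) \<and>
              (\<forall>(t, r)\<in>Omega. \<alpha> t r * Eop n a b c p u t r = pd_t (eval_df T u) t r + pd_r (eval_df X u) t r)"
    and K: "kT < K" "kX < K" and w: "w > 0" and r0: "r0 > 0" and e: "\<bar>e\<bar> < lam"
  shows "integral (cbox (t0, r0) (t0 + pi / w, r0 + pi / w))
      (\<lambda>(t, r). \<alpha> t r * E_test a b c p n lam k (bump w t0 K) (bump_exp w r0 K k) e t r) =
    integral (cbox (t0, r0) (t0 + pi / w, r0 + pi / w))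
      (\<lambda>(t, r). \<alpha> t r * E_test a b c p n lam k (bump w t0 K) (bump_exp w r0 K k) 0 t r)"
proof -
  define t1 where "t1 = t0 + pi / w"
  define r1 where "r1 = r0 + pi / w"
  define A where "A = bump w t0 K"
  define C where "C = bump_exp w r0 K k"
  have tt: "t0 \<le> t1" and rr: "r0 \<le> r1" using w by (simp_all add: t1_def r1_def)
  have sA: "smooth_real A" and sC: "smooth_real C"
    unfolding A_def C_def by (rule smooth_real_bump smooth_real_bump_exp)+
  let ?u = "test_fam lam k A C"
  define Bd where "Bd u = integral {r0..r1} (\<lambda>r. eval_df T u t1 r - eval_df T u t0 r) +
      integral {t0..t1} (\<lambda>t. eval_df X u t r1 - eval_df X u t r0)" for u
  have main: "integral (cbox (t0, r0) (t1, r1)) (\<lambda>(t, r). \<alpha> t r * E_test a b c p n lam k A C e' t r) = Bd (?u e')"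
    if e': "\<bar>e'\<bar> < lam" for e'
  proof -
    have "admissible (?u e')"
      using admissible_test_fam[OF sA sC e'] bump_bound bump_exp_bound unfolding A_def C_def by blast
    note law' = law[rule_format, OF this]
    show ?thesis
      using integral_conservation_law[OF conjunct1[OF law'] conjunct1[OF conjunct2[OF law']]
          conjunct2[OF conjunct2[OF law']] r0 tt rr]
      unfolding Eop_test_fam[OF sA sC] Bd_def by simp
  qed
  have jT: "eval_df T (?u e) t r = eval_df T (?u 0) t r" if "t = t0 \<or> t = t1" for t r
    unfolding eval_df_def
  proof (rule lT)
    fix i j assume "i + j \<le> kT"
    then have "Dn i A t = 0" unfolding A_def using bump_vanish[OF w] K that by (auto simp: t1_def)
    then show "jet (?u e) t r i j = jet (?u 0) t r i j" by (intro jet_test_fam_eq sA sC) simp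
  qed
  have jX: "eval_df X (?u e) t r = eval_df X (?u 0) t r" if "r = r0 \<or> r = r1" for t r
    unfolding eval_df_def
  proof (rule lX)
    fix i j assume "i + j \<le> kX"
    then have "Dn j C r = 0" unfolding C_def using bump_exp_vanish[OF w] K that by (auto simp: r1_def)
    then show "jet (?u e) t r i j = jet (?u 0) t r i j" by (intro jet_test_fam_eq sA sC) simp
  qed
  have "Bd (?u e) = Bd (?u 0)" unfolding Bd_def using jT jX by simp
  then show ?thesis
    using main[OF e] main[of 0] e unfolding t1_def r1_def A_def C_def by simp
qed

text \<open>A parameter integral that is constant near 0 has vanishing derivative there; by the
  Leibniz rule this derivative is the integral of the parameter derivative.\<close>

lemma integral_const_imp_integral_deriv_zero:
  fixes f fx :: "real \<Rightarrow> 'b::euclidean_space \<Rightarrow> real"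
  assumes der: "\<And>e x. e \<in> U \<Longrightarrow> x \<in> cbox u v \<Longrightarrow> ((\<lambda>e. f e x) has_field_derivative fx e x) (at e within U)"
    and int: "\<And>e. e \<in> U \<Longrightarrow> f e integrable_on cbox u v"
    and cont: "continuous_on (U \<times> cbox u v) (\<lambda>(e, x). fx e x)"
    and U: "convex U" "0 \<in> interior U"
    and const: "\<And>e. e \<in> U \<Longrightarrow> integral (cbox u v) (f e) = integral (cbox u v) (f 0)"
  shows "integral (cbox u v) (fx 0) = 0"
proof -
  have U0: "0 \<in> U" using U(2) interior_subset by blast
  have "((\<lambda>e. integral (cbox u v) (f e)) has_field_derivative integral (cbox u v) (fx 0)) (at 0 within U)"
    by (rule leibniz_rule_field_derivative[OF der int cont U0 U(1)])
  then have L: "((\<lambda>e. integral (cbox u v) (f e)) has_field_derivative integral (cbox u v) (fx 0)) (at 0)"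
    using at_within_interior[OF U(2)] by simp
  have "((\<lambda>e. integral (cbox u v) (f e)) has_field_derivative 0) (at 0)"
  proof (rule has_field_derivative_transform_within_open[OF DERIV_const, of "interior U"])
    fix e assume "e \<in> interior U"
    then show "integral (cbox u v) (f 0) = integral (cbox u v) (f e)"
      using const interior_subset by (metis subsetD)
  qed (use U(2) in auto)
  then show ?thesis using DERIV_unique[OF L] by simp
qed

lemma continuous_on_test_integrands:
  fixes \<alpha> :: "real \<Rightarrow> real \<Rightarrow> real" and S :: "(real \<times> real \<times> real) set"
  assumes ca: "continuous_on Omega (\<lambda>(t, r). \<alpha> t r)" and S: "snd ` S \<subseteq> Omega"
    and A: "smooth_real A" and C: "smooth_real C"
    and pos: "\<And>y. y \<in> S \<Longrightarrow> lam * exp (k * snd (snd y)) + fst y * (A (fst (snd y)) * C (snd (snd y))) > 0"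
  shows "continuous_on S (\<lambda>y. \<alpha> (fst (snd y)) (snd (snd y)) *
      E_test a b c p n lam k A C (fst y) (fst (snd y)) (snd (snd y)))"
    "continuous_on S (\<lambda>y. \<alpha> (fst (snd y)) (snd (snd y)) *
      lin_test a b c p n lam k A C (fst y) (fst (snd y)) (snd (snd y)))"
proof -
  have cT: "continuous_on S (\<lambda>y. g (fst (snd y)))" if "continuous_on UNIV g" for g
    by (rule continuous_on_compose2[OF that]) (auto intro!: continuous_intros)
  have cR: "continuous_on S (\<lambda>y. g (snd (snd y)))" if "continuous_on UNIV g" for g
    by (rule continuous_on_compose2[OF that]) (auto intro!: continuous_intros)
  have cA: "continuous_on S (\<lambda>y. Dn i A (fst (snd y)))" for i
    by (rule cT[OF smooth_real_cont[OF smooth_real_Dn[OF A]]])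
  have cC: "continuous_on S (\<lambda>y. Dn i C (snd (snd y)))" for i
    by (rule cR[OF smooth_real_cont[OF smooth_real_Dn[OF C]]])
  have c0: "continuous_on S (\<lambda>y. A (fst (snd y)))" "continuous_on S (\<lambda>y. C (snd (snd y)))"
    using cA[of 0] cC[of 0] by simp_all
  have "continuous_on S ((\<lambda>(t, r). \<alpha> t r) \<circ> snd)"
    by (rule continuous_on_compose[OF continuous_on_snd[OF continuous_on_id] continuous_on_subset[OF ca S]])
  then have cal: "continuous_on S (\<lambda>y. \<alpha> (fst (snd y)) (snd (snd y)))" by (simp add: o_def split_beta)
  have rnz: "snd (snd y) \<noteq> 0" if "y \<in> S" for y
    using S that by (cases "snd y") (auto simp: image_subset_iff)
  show "continuous_on S (\<lambda>y. \<alpha> (fst (snd y)) (snd (snd y)) *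
      E_test a b c p n lam k A C (fst y) (fst (snd y)) (snd (snd y)))"
    unfolding E_test_def
    by (intro continuous_intros continuous_E_line(1) cal cA cC c0) (auto simp: rnz pos)
  show "continuous_on S (\<lambda>y. \<alpha> (fst (snd y)) (snd (snd y)) *
      lin_test a b c p n lam k A C (fst y) (fst (snd y)) (snd (snd y)))"
    unfolding lin_test_def
    by (intro continuous_intros continuous_E_line(2) cal cA cC c0) (auto simp: rnz pos)
qed

lemma integral_lin_test_zero:
  fixes \<alpha> :: "real \<Rightarrow> real \<Rightarrow> real"
  assumes ca: "continuous_on Omega (\<lambda>(t, r). \<alpha> t r)"
    and const: "\<And>e. \<bar>e\<bar> < lam \<Longrightarrow>
      integral (cbox (t0, r0) (t1, r1)) (\<lambda>(t, r). \<alpha> t r * E_test a b c p n lam k A C e t r) =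
      integral (cbox (t0, r0) (t1, r1)) (\<lambda>(t, r). \<alpha> t r * E_test a b c p n lam k A C 0 t r)"
    and A: "smooth_real A" "\<And>t. \<bar>A t\<bar> \<le> 1" and C: "smooth_real C" "\<And>r. \<bar>C r\<bar> \<le> exp (k * r)"
    and lam: "lam > 0" and r0: "r0 > 0"
  shows "integral (cbox (t0, r0) (t1, r1)) (\<lambda>(t, r). \<alpha> t r * lin_test a b c p n lam k A C 0 t r) = 0"
proof -
  let ?R = "cbox (t0, r0) (t1, r1)"
  define U where "U = {- (lam / 2) .. lam / 2}"
  define f where "f e = (\<lambda>x. \<alpha> (fst x) (snd x) * E_test a b c p n lam k A C e (fst x) (snd x))" for e
  define fx where "fx e = (\<lambda>x. \<alpha> (fst x) (snd x) * lin_test a b c p n lam k A C e (fst x) (snd x))" for e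
  have posU: "lam * exp (k * r) + e * (A t * C r) > 0" if "e \<in> U" for e t r
  proof -
    have "\<bar>e\<bar> < lam" using that lam by (auto simp: U_def)
    then show ?thesis using test_fam_pos[where e=e and lam=lam and A=A and t=t and C=C and k=k and r=r] A(2) C(2)
      by (simp add: test_fam_def mult.assoc)
  qed
  have U: "convex U" "0 \<in> interior U" using lam by (auto simp: U_def)
  have S: "snd ` (U \<times> ?R) \<subseteq> Omega" using rect_subset_Omega[OF r0] by auto
  note cont = continuous_on_test_integrands[OF ca S A(1) C(1), where a=a and b=b and c=c and p=p and n=n]
  have cont_f: "continuous_on (U \<times> ?R) (\<lambda>y. f (fst y) (snd y))"
    unfolding f_def by (rule cont(1)) (auto simp: posU)
  have cont_fx: "continuous_on (U \<times> ?R) (\<lambda>(e, x). fx e x)"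
    unfolding fx_def case_prod_beta' by (rule cont(2)) (auto simp: posU)
  have "integral ?R (fx 0) = 0"
  proof (rule integral_const_imp_integral_deriv_zero[OF _ _ cont_fx U])
    fix e x assume e: "e \<in> U" and "x \<in> ?R"
    show "((\<lambda>e. f e x) has_field_derivative fx e x) (at e within U)"
      unfolding f_def fx_def E_test_def lin_test_def
      by (rule has_field_derivative_at_within, rule DERIV_cmult, rule E_line_has_deriv) (use posU[OF e] in simp)
  next
    fix e assume "e \<in> U"
    have "continuous_on ?R ((\<lambda>y. f (fst y) (snd y)) \<circ> (\<lambda>x. (e, x)))"
      by (rule continuous_on_compose[OF _ continuous_on_subset[OF cont_f]])
         (auto intro!: continuous_intros simp: \<open>e \<in> U\<close>)
    then show "f e integrable_on ?R" by (intro integrable_continuous) (simp add: o_def)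
    have e: "\<bar>e\<bar> < lam" using \<open>e \<in> U\<close> lam by (auto simp: U_def)
    show "integral ?R (f e) = integral ?R (f 0)"
      using const[OF e] unfolding f_def case_prod_beta' .
  qed
  then show ?thesis unfolding fx_def by (simp add: case_prod_beta')
qed

text \<open>\<open>bg_pow lam p k r\<close> is \<open>U0^p\<close> for the background \<open>U0 = lam exp (k r)\<close>.\<close>

definition bg_pow :: "real \<Rightarrow> real \<Rightarrow> real \<Rightarrow> real \<Rightarrow> real" where
  "bg_pow lam p k r = lam powr p * exp (p * k * r)"

lemma bg_pow_deriv: "((\<lambda>x. bg_pow lam p k x) has_real_derivative p * k * bg_pow lam p k r) (at r)"
  unfolding bg_pow_def by (auto intro!: derivative_eq_intros simp: algebra_simps)

lemma bg_powr:
  assumes "lam > 0"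
  shows "(lam * exp (k * r)) powr p = bg_pow lam p k r"
    "(lam * exp (k * r)) powr (p - 1) = bg_pow lam p k r / (lam * exp (k * r))"
    "(lam * exp (k * r)) powr (p - 1 - 1) = bg_pow lam p k r / (lam * exp (k * r))\<^sup>2"
proof -
  show 0: "(lam * exp (k * r)) powr p = bg_pow lam p k r"
    unfolding bg_pow_def using assms by (simp add: powr_mult exp_powr_real algebra_simps)
  have pos: "lam * exp (k * r) > 0" using assms by simp
  show "(lam * exp (k * r)) powr (p - 1) = bg_pow lam p k r / (lam * exp (k * r))"
    using pos by (simp add: powr_diff 0)
  show "(lam * exp (k * r)) powr (p - 1 - 1) = bg_pow lam p k r / (lam * exp (k * r))\<^sup>2"
    using pos by (simp add: powr_diff 0 power2_eq_square)
qed

text \<open>The formal adjoint of the linearisation of E at \<open>lam exp (k r)\<close>, applied to alpha and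
  expanded so that its dependence on lam and k is explicit.\<close>

definition adjoint_lin :: "(real \<Rightarrow> real \<Rightarrow> real) \<Rightarrow> real \<Rightarrow> real \<Rightarrow> real \<Rightarrow> real \<Rightarrow> real \<Rightarrow> real \<Rightarrow> real \<Rightarrow> real \<Rightarrow> real \<Rightarrow> real" where
  "adjoint_lin \<alpha> a b c p n lam k t r =
     pd 2 0 \<alpha> t r - c * pd 0 2 \<alpha> t r + c * (- (n - 1) / r\<^sup>2 * \<alpha> t r + (n - 1) / r * pd 0 1 \<alpha> t r)
     + bg_pow lam p k r * (b * (- pd 0 2 \<alpha> t r + (n - 1) / r * pd 0 1 \<alpha> t r + (- (n - 1) / r\<^sup>2) * \<alpha> t r)
        + 2 * k * (a - b * p) * pd 0 1 \<alpha> t r + k\<^sup>2 * (a - b * p) * (p + 1) * \<alpha> t r)"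

text \<open>At the background, the linearisation of E is \<open>v \<mapsto> v_tt - (a2 v_rr + a1 v_r + a0 v)\<close>
  with the following coefficients depending on r only, listed with the derivatives needed
  for its adjoint.\<close>

definition lin_a2 :: "real \<Rightarrow> real \<Rightarrow> real \<Rightarrow> real \<Rightarrow> real \<Rightarrow> real \<Rightarrow> real" where
  "lin_a2 b c p lam k r = c + b * bg_pow lam p k r"

definition lin_a2' :: "real \<Rightarrow> real \<Rightarrow> real \<Rightarrow> real \<Rightarrow> real \<Rightarrow> real" where
  "lin_a2' b p lam k r = b * (p * k * bg_pow lam p k r)"

definition lin_a2'' :: "real \<Rightarrow> real \<Rightarrow> real \<Rightarrow> real \<Rightarrow> real \<Rightarrow> real" where
  "lin_a2'' b p lam k r = b * (p * k * (p * k * bg_pow lam p k r))"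

definition lin_a1 :: "real \<Rightarrow> real \<Rightarrow> real \<Rightarrow> real \<Rightarrow> real \<Rightarrow> real \<Rightarrow> real \<Rightarrow> real \<Rightarrow> real" where
  "lin_a1 n a b c p lam k r = (n - 1) / r * (c + b * bg_pow lam p k r) + (2 * a * k) * bg_pow lam p k r"

definition lin_a1' :: "real \<Rightarrow> real \<Rightarrow> real \<Rightarrow> real \<Rightarrow> real \<Rightarrow> real \<Rightarrow> real \<Rightarrow> real \<Rightarrow> real" where
  "lin_a1' n a b c p lam k r = - (n - 1) / r\<^sup>2 * (c + b * bg_pow lam p k r)
     + (n - 1) / r * (b * (p * k * bg_pow lam p k r)) + (2 * a * k) * (p * k * bg_pow lam p k r)"

definition lin_a0 :: "real \<Rightarrow> real \<Rightarrow> real \<Rightarrow> real \<Rightarrow> real \<Rightarrow> real \<Rightarrow> real \<Rightarrow> real" where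
  "lin_a0 n a b p lam k r = bg_pow lam p k r * (b * p * (k\<^sup>2 + (n - 1) / r * k) + a * (p - 1) * k\<^sup>2)"

lemma lin_test_at_background:
  assumes lam: "lam > 0" and r: "r > 0"
  shows "lin_test a b c p n lam k A C 0 t r = Dn 2 A t * C r
    - A t * (lin_a2 b c p lam k r * Dn 2 C r + lin_a1 n a b c p lam k r * Dn 1 C r + lin_a0 n a b p lam k r * C r)"
proof -
  have pos: "lam * exp (k * r) \<noteq> 0" using lam by simp
  have e0: "(lam * exp (k * r) + 0 * (A t * C r)) powr p = bg_pow lam p k r"
    and e1: "(lam * exp (k * r) + 0 * (A t * C r)) powr (p - 1) = bg_pow lam p k r / (lam * exp (k * r))"
    and e2: "(lam * exp (k * r) + 0 * (A t * C r)) powr (p - 1 - 1) = bg_pow lam p k r / (lam * exp (k * r))\<^sup>2"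
    using bg_powr[OF lam, where k=k and r=r] by simp_all
  show ?thesis
    unfolding lin_test_def E_line_deriv_def e0 e1 e2 lin_a2_def lin_a1_def lin_a0_def
    using pos r by (simp add: field_simps power2_eq_square)
qed

lemma lin_coefficient_derivs:
  "(lin_a2 b c p lam k has_real_derivative lin_a2' b p lam k x) (at x)"
  "(lin_a2' b p lam k has_real_derivative lin_a2'' b p lam k x) (at x)"
  "x > 0 \<Longrightarrow> (lin_a1 n a b c p lam k has_real_derivative lin_a1' n a b c p lam k x) (at x)"
proof -
  note dV = bg_pow_deriv[of lam p k]
  show "(lin_a2 b c p lam k has_real_derivative lin_a2' b p lam k x) (at x)"
    unfolding lin_a2_def[abs_def] lin_a2'_def
    by (rule DERIV_cong[OF DERIV_add[OF DERIV_const DERIV_cmult[OF dV]]]) simp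
  show "(lin_a2' b p lam k has_real_derivative lin_a2'' b p lam k x) (at x)"
    unfolding lin_a2'_def[abs_def] lin_a2''_def by (intro DERIV_cmult dV)
  assume x: "x > 0"
  have dm: "((\<lambda>x. (n - 1) / x) has_real_derivative - (n - 1) / x\<^sup>2) (at x)"
    using x by (auto intro!: derivative_eq_intros simp: power2_eq_square)
  show "(lin_a1 n a b c p lam k has_real_derivative lin_a1' n a b c p lam k x) (at x)"
    unfolding lin_a1_def[abs_def] lin_a1'_def
    by (rule DERIV_cong[OF DERIV_add[OF DERIV_mult[OF dm DERIV_add[OF DERIV_const DERIV_cmult[OF dV]]]
          DERIV_cmult[OF dV]]]) (simp add: algebra_simps)
qed

lemma adjoint_lin_eq_radial_adjoint:
  assumes "r > 0"
  shows "adjoint_lin \<alpha> a b c p n lam k t r = pd 2 0 \<alpha> t r - radial_adjoint \<alpha> (lin_a2 b c p lam k)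
    (lin_a2' b p lam k) (lin_a2'' b p lam k) (lin_a1 n a b c p lam k) (lin_a1' n a b c p lam k) (lin_a0 n a b p lam k) t r"
  unfolding adjoint_lin_def radial_adjoint_def lin_a2_def lin_a2'_def lin_a2''_def lin_a1_def lin_a1'_def lin_a0_def
  using assms by (simp add: field_simps power2_eq_square)

lemma integral_lin_test_adjoint:
  fixes \<alpha> :: "real \<Rightarrow> real \<Rightarrow> real"
  assumes sa: "smooth_on2 Omega \<alpha>" and r0: "r0 > 0" and w: "w > 0" and K: "2 \<le> K" and lam: "lam > 0"
  shows "integral (cbox (t0, r0) (t0 + pi / w, r0 + pi / w))
      (\<lambda>(t, r). \<alpha> t r * lin_test a b c p n lam k (bump w t0 K) (bump_exp w r0 K k) 0 t r) =
    integral (cbox (t0, r0) (t0 + pi / w, r0 + pi / w))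
      (\<lambda>(t, r). adjoint_lin \<alpha> a b c p n lam k t r * (bump w t0 K t * bump_exp w r0 K k r))"
proof -
  define A where "A = bump w t0 K"
  define C where "C = bump_exp w r0 K k"
  define t1 where "t1 = t0 + pi / w"
  define r1 where "r1 = r0 + pi / w"
  let ?R = "cbox (t0, r0) (t1, r1)"
  have tt: "t0 \<le> t1" and rr: "r0 \<le> r1" using w by (simp_all add: t1_def r1_def)
  have Rpos: "snd x > 0" if "x \<in> ?R" for x
    using that r0 by (cases x) (auto simp: cbox_Pair_iff)
  note d = lin_coefficient_derivs
  have da1: "x \<in> {r0..r1} \<Longrightarrow> (lin_a1 n a b c p lam k has_real_derivative lin_a1' n a b c p lam k x) (at x)" for x
    using d(3)[of x] r0 by simp
  have ca: "continuous_on {r0..r1} (lin_a2'' b p lam k)" "continuous_on {r0..r1} (lin_a1' n a b c p lam k)"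
      "continuous_on {r0..r1} (lin_a0 n a b p lam k)"
    unfolding lin_a2''_def[abs_def] lin_a1'_def[abs_def] lin_a0_def[abs_def] bg_pow_def
    using r0 by (auto intro!: continuous_intros)
  have sA: "smooth_real A" and sC: "smooth_real C"
    unfolding A_def C_def by (rule smooth_real_bump smooth_real_bump_exp)+
  have bA: "Dn j A t = 0" if "j < 2" "t = t0 \<or> t = t1" for j t
    unfolding A_def using bump_vanish[OF w] that K by (auto simp: t1_def)
  have bC: "Dn j C r = 0" if "j < 2" "r = r0 \<or> r = r1" for j r
    unfolding C_def using bump_exp_vanish[OF w] that K by (auto simp: r1_def)
  have "integral ?R (\<lambda>(t, r). \<alpha> t r * lin_test a b c p n lam k A C 0 t r) =
      integral ?R (\<lambda>(t, r). \<alpha> t r * (Dn 2 A t * C r - A t * (lin_a2 b c p lam k r * Dn 2 C r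
        + lin_a1 n a b c p lam k r * Dn 1 C r + lin_a0 n a b p lam k r * C r)))"
    by (rule integral_cong) (use Rpos lin_test_at_background[OF lam] in \<open>auto simp: split_beta\<close>)
  also have "\<dots> = integral ?R (\<lambda>(t, r). (pd 2 0 \<alpha> t r - radial_adjoint \<alpha> (lin_a2 b c p lam k)
      (lin_a2' b p lam k) (lin_a2'' b p lam k) (lin_a1 n a b c p lam k) (lin_a1' n a b c p lam k)
      (lin_a0 n a b p lam k) t r) * (A t * C r))"
    by (rule integral_adjoint_rect[OF sa r0 tt rr d(1,2) da1 ca sA _ _ _ _ sC])
       (use bA[of 0] bA[of 1] bC[of 0] bC[of 1] in simp_all)
  also have "\<dots> = integral ?R (\<lambda>(t, r). adjoint_lin \<alpha> a b c p n lam k t r * (A t * C r))"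
    by (rule integral_cong) (use Rpos adjoint_lin_eq_radial_adjoint in \<open>auto simp: split_beta\<close>)
  finally show ?thesis unfolding A_def C_def t1_def r1_def .
qed

lemma continuous_sign_nhd:
  fixes P :: "real \<times> real \<Rightarrow> real"
  assumes cP: "continuous_on Omega P" and z: "z \<in> Omega" and ne: "P z \<noteq> 0"
  obtains d where "d > 0" "\<And>x. dist x z < d \<Longrightarrow> P z * P x > 0"
proof -
  define Q where "Q x = P z * P x" for x
  have "isCont P z" using cP open_Omega z continuous_on_eq_continuous_at by blast
  then have "isCont Q z" unfolding Q_def by (intro continuous_intros)
  moreover have "Q z > 0" using ne unfolding Q_def by (metis not_real_square_gt_zero)
  ultimately have "eventually (\<lambda>x. Q x > 0) (nhds z)"
    unfolding isCont_def by (simp add: order_tendstoD(1) tendsto_at_iff_tendsto_nhds)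
  then show ?thesis using that unfolding eventually_nhds_metric Q_def by blast
qed

lemma dist_square_centre:
  assumes "(t, r) \<in> cbox (ts - h, rs - h) (ts + h, rs + h)"
  shows "dist (t, r) (ts, rs) \<le> 2 * h"
proof -
  have "dist (t, r) (ts, rs) \<le> \<bar>t - ts\<bar> + \<bar>r - rs\<bar>"
    unfolding dist_Pair_Pair dist_real_def using sqrt_sum_squares_le_sum_abs[of "t - ts" "r - rs"] by simp
  also have "\<dots> \<le> 2 * h" using assms by (auto simp: cbox_Pair_iff)
  finally show ?thesis .
qed

text \<open>A continuous function whose integrals against all sufficiently small bump weights
  centred at a point vanish, vanishes at that point: the weights are nonnegative and positive
  at the centre.\<close>

lemma bump_square_localization:
  fixes P :: "real \<Rightarrow> real \<Rightarrow> real"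
  assumes cP: "continuous_on Omega (\<lambda>(t, r). P t r)" and rs: "rs > 0"
    and vanish: "\<And>w. w > 0 \<Longrightarrow> pi / (2 * w) < rs \<Longrightarrow>
      integral (cbox (ts - pi / (2 * w), rs - pi / (2 * w)) (ts - pi / (2 * w) + pi / w, rs - pi / (2 * w) + pi / w))
        (\<lambda>(t, r). P t r * (bump w (ts - pi / (2 * w)) K t * bump_exp w (rs - pi / (2 * w)) K k r)) = 0"
  shows "P ts rs = 0"
proof (rule ccontr)
  assume ne: "P ts rs \<noteq> 0"
  define z where "z = (ts, rs)"
  define Q where "Q x = P ts rs * P (fst x) (snd x)" for x
  obtain d where d: "d > 0" "\<And>x. dist x z < d \<Longrightarrow> Q x > 0"
    using continuous_sign_nhd[of "\<lambda>x. P (fst x) (snd x)" z] cP rs ne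
    by (auto simp: Q_def z_def split_beta)
  have Qz: "Q z > 0" using d by simp
  define h where "h = min d rs / 4"
  have h: "h > 0" "h < rs" "2 * h < d" using d rs by (auto simp: h_def)
  define w where "w = pi / (2 * h)"
  have w: "w > 0" "pi / (2 * w) = h" "pi / w = 2 * h" using h by (simp_all add: w_def)
  define A where "A = bump w (ts - h) K"
  define C where "C = bump_exp w (rs - h) K k"
  let ?R = "cbox (ts - h, rs - h) (ts + h, rs + h)"
  define f where "f x = Q x * (A (fst x) * C (snd x))" for x
  have cf: "continuous_on ?R f"
  proof -
    have "continuous_on ?R (\<lambda>x. P (fst x) (snd x))"
      using continuous_on_subset[OF cP rect_subset_Omega, of "rs - h" "ts - h" "ts + h" "rs + h"] h
      by (simp add: split_beta)
    moreover have "continuous_on ?R (\<lambda>x. A (fst x))" "continuous_on ?R (\<lambda>x. C (snd x))"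
      unfolding A_def C_def
      by (intro continuous_on_fst_comp continuous_on_rect_snd_comp smooth_real_cont
          smooth_real_bump smooth_real_bump_exp)+
    ultimately show ?thesis unfolding f_def Q_def by (intro continuous_intros)
  qed
  have "integral ?R f = P ts rs * integral ?R (\<lambda>(t, r). P t r * (A t * C r))"
    unfolding f_def Q_def case_prod_beta' mult.assoc by (rule Henstock_Kurzweil_Integration.integral_mult_right)
  also have "integral ?R (\<lambda>(t, r). P t r * (A t * C r)) = 0"
  proof -
    have "ts - h + pi / w = ts + h" "rs - h + pi / w = rs + h" using w(3) by simp_all
    then show ?thesis using vanish[OF w(1)] h(2) unfolding w(2) A_def C_def by (simp add: ac_simps)
  qed
  finally have "integral ?R f = 0" by simp
  then have f0: "(f has_integral 0) ?R" using integrable_continuous[OF cf] by (metis has_integral_integral)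
  have fnn: "0 \<le> f x" if x: "x \<in> box (ts - h, rs - h) (ts + h, rs + h)" for x
  proof -
    obtain t r where xe: "x = (t, r)" by (cases x)
    have xR: "(t, r) \<in> ?R" using x box_subset_cbox unfolding xe by blast
    then have tr: "ts - h \<le> t" "t \<le> ts + h" "rs - h \<le> r" "r \<le> rs + h"
      by (auto simp: cbox_Pair_iff)
    have "Q x > 0" using d(2) dist_square_centre[OF xR] h(3) unfolding xe z_def by force
    moreover have "A t \<ge> 0" unfolding A_def by (rule bump_nonneg[OF w(1)]) (use tr w in auto)
    moreover have "C r \<ge> 0" unfolding C_def by (rule bump_exp_nonneg[OF w(1)]) (use tr w in auto)
    ultimately show ?thesis unfolding f_def xe by simp
  qed
  have ne_box: "box (ts - h, rs - h) (ts + h, rs + h) \<noteq> {}" using h by (auto simp: box_ne_empty Basis_prod_def)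
  have zR: "z \<in> ?R" using h by (auto simp: z_def cbox_Pair_iff)
  have "f z = 0" by (rule has_integral_0_cbox_imp_0[OF cf fnn f0 ne_box zR])
  moreover have "A ts = 1" "C rs = exp (k * rs)"
    using bump_centre[OF w(1), of "ts - h" K] bump_centre[OF w(1), of "rs - h" K] w(2)
    unfolding A_def C_def bump_exp_def by simp_all
  then have "f z = Q z * exp (k * rs)" by (simp add: f_def z_def)
  ultimately show False using Qz by simp
qed

lemma continuous_adjoint_lin:
  assumes sa: "smooth_on2 Omega \<alpha>"
  shows "continuous_on Omega (\<lambda>(t, r). adjoint_lin \<alpha> a b c p n lam k t r)"
proof -
  have pos: "\<And>x. x \<in> Omega \<Longrightarrow> snd x \<noteq> 0" by (auto simp: Omega_def)
  have c: "continuous_on Omega (\<lambda>x. pd i j \<alpha> (fst x) (snd x))" for i j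
    by (rule continuous_on_pd[OF sa order_refl])
  have c0: "continuous_on Omega (\<lambda>x. \<alpha> (fst x) (snd x))" using c[of 0 0] by simp
  show ?thesis unfolding adjoint_lin_def bg_pow_def case_prod_beta'
    by (intro continuous_intros c c0) (auto dest: pos)
qed

lemma adjoint_lin_zero:
  fixes \<alpha> :: "real \<Rightarrow> real \<Rightarrow> real" and T X :: "real \<Rightarrow> real \<Rightarrow> (nat \<Rightarrow> nat \<Rightarrow> real) \<Rightarrow> real"
  assumes sa: "smooth_on2 Omega \<alpha>" and lT: "local_fun T" and lX: "local_fun X"
    and law: "\<forall>u. admissible u \<longrightarrow> smooth_on2 Omega (eval_df T u) \<and> smooth_on2 Omega (eval_df X u) \<and>
       (\<forall>(t, r)\<in>Omega. \<alpha> t r * Eop n a b c p u t r = pd_t (eval_df T u) t r + pd_r (eval_df X u) t r)"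
    and lam: "lam > 0" and rs: "rs > 0"
  shows "adjoint_lin \<alpha> a b c p n lam k ts rs = 0"
proof -
  obtain kT where kT: "\<And>t r J J'. (\<And>i j. i + j \<le> kT \<Longrightarrow> J i j = J' i j) \<Longrightarrow> T t r J = T t r J'"
    using lT unfolding local_fun_def by blast
  obtain kX where kX: "\<And>t r J J'. (\<And>i j. i + j \<le> kX \<Longrightarrow> J i j = J' i j) \<Longrightarrow> X t r J = X t r J'"
    using lX unfolding local_fun_def by blast
  define K where "K = kT + kX + 2"
  have K: "kT < K" "kX < K" "2 \<le> K" by (auto simp: K_def)
  show ?thesis
  proof (rule bump_square_localization[OF continuous_adjoint_lin[OF sa] rs, where K=K and k=k])
    fix w :: real assume w: "w > 0" and h: "pi / (2 * w) < rs"
    define t0 where "t0 = ts - pi / (2 * w)"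
    define r0 where "r0 = rs - pi / (2 * w)"
    have r0: "r0 > 0" using h by (simp add: r0_def)
    let ?R = "cbox (t0, r0) (t0 + pi / w, r0 + pi / w)"
    have "integral ?R (\<lambda>(t, r). \<alpha> t r * lin_test a b c p n lam k (bump w t0 K) (bump_exp w r0 K k) 0 t r) = 0"
    proof (rule integral_lin_test_zero[OF _ _ smooth_real_bump bump_bound smooth_real_bump_exp bump_exp_bound lam r0])
      show "continuous_on Omega (\<lambda>(t, r). \<alpha> t r)" using smooth_cont[OF sa, of 0 0] by simp
      show "integral ?R (\<lambda>(t, r). \<alpha> t r * E_test a b c p n lam k (bump w t0 K) (bump_exp w r0 K k) e t r) =
          integral ?R (\<lambda>(t, r). \<alpha> t r * E_test a b c p n lam k (bump w t0 K) (bump_exp w r0 K k) 0 t r)"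
        if "\<bar>e\<bar> < lam" for e
        by (rule integral_E_test_const[where T=T and X=X and kT=kT and kX=kX, OF kT kX law K(1,2) w r0 that])
    qed
    then show "integral (cbox (ts - pi / (2 * w), rs - pi / (2 * w)) (ts - pi / (2 * w) + pi / w, rs - pi / (2 * w) + pi / w))
        (\<lambda>(t, r). adjoint_lin \<alpha> a b c p n lam k t r * (bump w (ts - pi / (2 * w)) K t * bump_exp w (rs - pi / (2 * w)) K k r)) = 0"
      unfolding t0_def[symmetric] r0_def[symmetric] integral_lin_test_adjoint[OF sa r0 w K(3) lam, symmetric] .
  qed
qed

text \<open>An expression \<open>P0 + lam^p e^(p k r) (B0 + 2 k d A1 + k^2 d (p + 1) A0)\<close> that vanishes
  for all \<open>lam > 0\<close> and all k has vanishing coefficients (in the case \<open>p = -1\<close> the last one is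
  invisible).\<close>

lemma coefficients_vanish:
  fixes P0 B0 A0 A1 d p r :: real
  assumes d: "d \<noteq> 0"
    and h: "\<And>lam k. lam > 0 \<Longrightarrow> P0 + (lam powr p * exp (p * k * r)) * (B0 + 2 * k * d * A1 + k\<^sup>2 * d * (p + 1) * A0) = 0"
  shows "(p \<noteq> -1 \<longrightarrow> A0 = 0) \<and> (p = -1 \<longrightarrow> A1 = 0 \<and> B0 = 0 \<and> P0 = 0)"
proof (cases "p = 0")
  case True
  have e0: "P0 + (B0 + 2 * k * d * A1 + k\<^sup>2 * d * A0) = 0" for k using h[of 1 k] True by simp
  have "P0 + B0 = 0" using e0[of 0] by simp
  moreover have "P0 + (B0 + 2 * d * A1 + d * A0) = 0" using e0[of 1] by simp
  moreover have "P0 + (B0 - 2 * d * A1 + d * A0) = 0" using e0[of "-1"] by simp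
  ultimately have "d * A0 = 0" by linarith
  then show ?thesis using d True by simp
next
  case False
  have h0: "P0 + lam powr p * B0 = 0" if "lam > 0" for lam using h[of lam 0] that by simp
  have "P0 + B0 = 0" using h0[of 1] by simp
  moreover have "P0 + 2 powr p * B0 = 0" using h0[of 2] by simp
  moreover have "2 powr p \<noteq> 1" using False by simp
  ultimately have B0: "B0 = 0" and P0: "P0 = 0"
    by (metis add_diff_cancel_left' diff_self mult_cancel_right1 right_minus_eq)+
  have e1: "exp (p * k * r) * (2 * k * d * A1 + k\<^sup>2 * d * (p + 1) * A0) = 0" for k
    using h[of 1 k] B0 P0 by simp
  have "2 * d * A1 + d * (p + 1) * A0 = 0" using e1[of 1] by simp
  moreover have "- 2 * d * A1 + d * (p + 1) * A0 = 0" using e1[of "-1"] by simp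
  ultimately have "d * (p + 1) * A0 = 0" "d * A1 = 0" by linarith+
  then have "(p + 1) * A0 = 0" "A1 = 0" using d by auto
  then show ?thesis using B0 P0 by (cases "p = -1") auto
qed

lemma adjoint_lin_coefficients:
  assumes d: "a - b * p \<noteq> 0" and Z: "\<And>lam k. lam > 0 \<Longrightarrow> adjoint_lin \<alpha> a b c p n lam k t r = 0"
  shows "(p \<noteq> -1 \<longrightarrow> \<alpha> t r = 0) \<and>
    (p = -1 \<longrightarrow> pd 0 1 \<alpha> t r = 0 \<and>
       b * (- pd 0 2 \<alpha> t r + (n - 1) / r * pd 0 1 \<alpha> t r + (- (n - 1) / r\<^sup>2) * \<alpha> t r) = 0 \<and>
       pd 2 0 \<alpha> t r - c * pd 0 2 \<alpha> t r + c * (- (n - 1) / r\<^sup>2 * \<alpha> t r + (n - 1) / r * pd 0 1 \<alpha> t r) = 0)"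
  by (rule coefficients_vanish[OF d]) (use Z in \<open>simp add: adjoint_lin_def bg_pow_def\<close>)

lemma radially_constant:
  assumes sa: "smooth_on2 Omega \<alpha>" and z: "\<And>t r. r > 0 \<Longrightarrow> pd 0 1 \<alpha> t r = 0" and r: "r > 0"
  shows "\<alpha> t r = \<alpha> t 1"
proof -
  have d: "((\<lambda>x. \<alpha> t x) has_real_derivative 0) (at x)" if "x > 0" for x
    using smooth_der(2)[OF sa that, of 0 0 t] z[OF that] by simp
  have c: "continuous_on {u..v} (\<lambda>x. \<alpha> t x)" if "u > 0" for u v
    using continuous_on_pd_slice_r[OF sa that, of v 0 0 t] by simp
  consider "r < 1" | "r = 1" | "r > 1" by linarith
  then show ?thesis
  proof cases
    case 1 show ?thesis by (rule DERIV_isconst_end[OF 1 c[OF r], symmetric]) (use r d in auto)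
  next
    case 2 then show ?thesis by simp
  next
    case 3 show ?thesis by (rule DERIV_isconst_end[OF 3 c]) (use d in auto)
  qed
qed

text \<open>In the case \<open>p = -1\<close> the surviving coefficients say that alpha does not depend on r and
  satisfies \<open>b (n - 1) alpha = 0\<close> and \<open>alpha_tt = c (n - 1) alpha / r^2\<close>; for \<open>n \<noteq> 1\<close> and
  \<open>(b, c) \<noteq> 0\<close> this forces alpha = 0.\<close>

lemma multiplier_zero_p_minus_one:
  assumes n: "n \<noteq> 1" and bc: "b \<noteq> 0 \<or> c \<noteq> 0" and sa: "smooth_on2 Omega \<alpha>"
    and A1: "\<And>t r. r > 0 \<Longrightarrow> pd 0 1 \<alpha> t r = 0"
    and B: "\<And>t r. r > 0 \<Longrightarrow> b * (- (n - 1) / r\<^sup>2 * \<alpha> t r) = 0"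
    and P: "\<And>t r. r > 0 \<Longrightarrow> pd 2 0 \<alpha> t r + c * (- (n - 1) / r\<^sup>2 * \<alpha> t r) = 0"
    and r: "r > 0"
  shows "\<alpha> t r = 0"
proof (cases "b = 0")
  case False
  then show ?thesis using B[OF r, of t] n r by simp
next
  case True
  then have c: "c \<noteq> 0" using bc by simp
  have cst: "\<alpha> s x = \<alpha> s 1" if "x > 0" for s x by (rule radially_constant[OF sa A1 that])
  have "pd 2 0 \<alpha> t 2 = pd 2 0 \<alpha> t 1"
  proof -
    have "(\<lambda>s. \<alpha> s 2) = (\<lambda>s. \<alpha> s 1)" using cst[of 2] by auto
    then show ?thesis by (simp add: pd_def pd_t_def numeral_2_eq_2)
  qed
  moreover have "pd 2 0 \<alpha> t 1 = c * (n - 1) * \<alpha> t 1" using P[of 1 t] by (simp add: algebra_simps)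
  moreover have "pd 2 0 \<alpha> t 2 = c * (n - 1) * \<alpha> t 1 / 4" using P[of 2 t] cst[of 2 t] by (simp add: field_simps)
  ultimately have "c * (n - 1) * \<alpha> t 1 = 0" by linarith
  then have "\<alpha> t 1 = 0" using c n by simp
  then show ?thesis using cst[OF r] by simp
qed

lemma kinematic_imp_a_eq_pb:
  assumes n: "n \<noteq> 1" and hyp: "(b * p)\<^sup>2 + a\<^sup>2 * (c + b)\<^sup>2 \<noteq> 0"
    and kin: "kinematic_cl n a b c p \<alpha>"
  shows "a = p * b"
proof (rule ccontr)
  assume "a \<noteq> p * b"
  then have d: "a - b * p \<noteq> 0" by (simp add: algebra_simps)
  obtain T X where sa: "smooth_on2 Omega \<alpha>" and nontriv: "\<exists>(t, r)\<in>Omega. \<alpha> t r \<noteq> 0"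
    and lT: "local_fun T" and lX: "local_fun X"
    and law: "\<forall>u. admissible u \<longrightarrow> smooth_on2 Omega (eval_df T u) \<and> smooth_on2 Omega (eval_df X u) \<and>
       (\<forall>(t, r)\<in>Omega. \<alpha> t r * Eop n a b c p u t r = pd_t (eval_df T u) t r + pd_r (eval_df X u) t r)"
    using kin unfolding kinematic_cl_def by blast
  have coeff: "(p \<noteq> -1 \<longrightarrow> \<alpha> t r = 0) \<and>
    (p = -1 \<longrightarrow> pd 0 1 \<alpha> t r = 0 \<and>
       b * (- pd 0 2 \<alpha> t r + (n - 1) / r * pd 0 1 \<alpha> t r + (- (n - 1) / r\<^sup>2) * \<alpha> t r) = 0 \<and>
       pd 2 0 \<alpha> t r - c * pd 0 2 \<alpha> t r + c * (- (n - 1) / r\<^sup>2 * \<alpha> t r + (n - 1) / r * pd 0 1 \<alpha> t r) = 0)"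
    if "r > 0" for t r
    by (rule adjoint_lin_coefficients[OF d adjoint_lin_zero[OF sa lT lX law _ that]])
  have "\<alpha> t r = 0" if r: "r > 0" for t r
  proof (cases "p = -1")
    case False then show ?thesis using coeff[OF r] by simp
  next
    case True
    have A1: "pd 0 1 \<alpha> t r = 0" if "r > 0" for t r using coeff[OF that] True by simp
    have A2: "pd 0 2 \<alpha> t r = 0" if r: "r > 0" for t r
    proof -
      have "pd 0 2 \<alpha> t r = pd_r (pd 0 1 \<alpha>) t r" by (simp add: pd_def numeral_2_eq_2)
      also have "\<dots> = pd_r (\<lambda>_ _. 0) t r" by (rule pd_r_local[OF A1 r])
      finally show ?thesis by (simp add: pd_r_def)
    qed
    show ?thesis
    proof (rule multiplier_zero_p_minus_one[OF n _ sa A1 _ _ r])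
      show "b \<noteq> 0 \<or> c \<noteq> 0" using hyp True by auto
      show "b * (- (n - 1) / r\<^sup>2 * \<alpha> t r) = 0" if "r > 0" for t r
        using coeff[OF that] True unfolding A1[OF that] A2[OF that] by simp
      show "pd 2 0 \<alpha> t r + c * (- (n - 1) / r\<^sup>2 * \<alpha> t r) = 0" if "r > 0" for t r
        using coeff[OF that] True unfolding A1[OF that] A2[OF that] by simp
    qed
  qed
  then show False using nontriv by auto
qed

theorem corollary1:
  fixes n a b c p :: real
  assumes "n \<noteq> 1"
    and "(b * p)\<^sup>2 + a\<^sup>2 * (c + b)\<^sup>2 \<noteq> 0"
  shows "((\<exists>\<alpha>. kinematic_cl n a b c p \<alpha>) \<longleftrightarrow>
            (divergence_form n a b c p \<and> quasilinear_hyperbolic b p))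
       \<and> ((divergence_form n a b c p \<and> quasilinear_hyperbolic b p) \<longleftrightarrow>
            (a = p * b \<and> p * b \<noteq> 0))"
proof -
  have div: "(divergence_form n a b c p \<and> quasilinear_hyperbolic b p) \<longleftrightarrow> (a = p * b \<and> p * b \<noteq> 0)"
    using divergence_imp_a_eq_pb[OF assms(1), of a b c p] a_eq_pb_imp_divergence[of a p b n c]
    by (auto simp: quasilinear_hyperbolic_def mult.commute)
  text \<open>If a = p b then the nondegeneracy hypothesis reduces to \<open>p b \<noteq> 0\<close>.\<close>
  have "(\<exists>\<alpha>. kinematic_cl n a b c p \<alpha>) \<longleftrightarrow> (a = p * b \<and> p * b \<noteq> 0)"
    using kinematic_imp_a_eq_pb[OF assms] a_eq_pb_imp_kinematic[of a p b n c] assms(2)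
    by (auto simp: mult.commute)
  then show ?thesis using div by blast
qed

end
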